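(* Let $\mathcal C$ be a subspace of $\mathcal H=\mathcal H_A\otimes\mathcal H_B$ with encoding isometry $\mathcal E:\mathcal L\to\mathcal C$ from a logical space $\mathcal L$ onto $\mathcal C$. Consider the following experiment: (1) a party chooses an arbitrary joint state of the logical system $\mathcal L$ and an auxiliary system $\mathrm{Aux}$ (of arbitrary finite dimension); (2) $\mathcal L$ is encoded with $\mathcal E$; (3) the party applies an arbitrary operation acting only on $\mathrm{Aux}$ and on the components in $\mathcal H_B$ of the encoding; (4) $\mathrm{Aux}$ is traced out. The set of possible resulting states of $\mathcal H$ (the corrupted codeword) is exactly $ST_B(\mathcal C)$.
   Context: A mixed state $\rho'$ is "in" $\mathcal C$ if $\mathrm{Tr}(P_{\mathcal C}\rho')=1$, where $P_{\mathcal C}$ is the projector onto $\mathcal C$. $ST_B(\mathcal C)=\{\rho:\exists\rho'\text{ in }\mathcal C,\ \mathrm{Tr}_B(\rho)=\mathrm{Tr}_B(\rho')\}$. *)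

theory Defs
  imports Complex_Main "Jordan_Normal_Form.Matrix"
begin

(* Finite-dimensional quantum mechanics with complex matrices (Jordan_Normal_Form.Matrix).
   A bipartite space C^m (x) C^d is C^(m*d) with basis index (i,k) |-> i*d + k. *)

definition adj :: "complex mat \<Rightarrow> complex mat" where
  "adj A = mat (dim_col A) (dim_row A) (\<lambda>(i,j). cnj (A $$ (j,i)))"

definition kron :: "complex mat \<Rightarrow> complex mat \<Rightarrow> complex mat" where
  "kron A B = mat (dim_row A * dim_row B) (dim_col A * dim_col B)
     (\<lambda>(i,j). A $$ (i div dim_row B, j div dim_col B) * B $$ (i mod dim_row B, j mod dim_col B))"

definition tr :: "complex mat \<Rightarrow> complex" where
  "tr A = (\<Sum>i<dim_row A. A $$ (i,i))"

definition ptrace2 :: "nat \<Rightarrow> complex mat \<Rightarrow> complex mat" where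
  "ptrace2 d M = mat (dim_row M div d) (dim_col M div d)
     (\<lambda>(i,j). \<Sum>k<d. M $$ (i*d+k, j*d+k))"

definition psd :: "nat \<Rightarrow> complex mat \<Rightarrow> bool" where
  "psd n A \<longleftrightarrow> A \<in> carrier_mat n n \<and>
     (\<forall>v \<in> carrier_vec n. let z = (\<Sum>i<n. cnj (v $ i) * (A *\<^sub>v v) $ i) in Im z = 0 \<and> 0 \<le> Re z)"

definition density :: "nat \<Rightarrow> complex mat \<Rightarrow> bool" where
  "density n \<rho> \<longleftrightarrow> \<rho> \<in> carrier_mat n n \<and> adj \<rho> = \<rho> \<and> psd n \<rho> \<and> tr \<rho> = 1"

definition msum :: "nat \<Rightarrow> complex mat list \<Rightarrow> complex mat" where
  "msum n Ms = mat n n (\<lambda>(i,j). \<Sum>M\<leftarrow>Ms. M $$ (i,j))"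

definition kraus :: "nat \<Rightarrow> complex mat list \<Rightarrow> bool" where
  "kraus n Ks \<longleftrightarrow> (\<forall>K \<in> set Ks. K \<in> carrier_mat n n) \<and> msum n (map (\<lambda>K. adj K * K) Ks) = 1\<^sub>m n"

definition apply_kraus :: "nat \<Rightarrow> complex mat list \<Rightarrow> complex mat \<Rightarrow> complex mat" where
  "apply_kraus n Ks \<rho> = msum n (map (\<lambda>K. K * \<rho> * adj K) Ks)"

definition orth_proj :: "nat \<Rightarrow> complex mat \<Rightarrow> bool" where
  "orth_proj n P \<longleftrightarrow> P \<in> carrier_mat n n \<and> adj P = P \<and> P * P = P"

definition state_in :: "nat \<Rightarrow> complex mat \<Rightarrow> complex mat \<Rightarrow> bool" where
  "state_in n PC \<rho>' \<longleftrightarrow> density n \<rho>' \<and> tr (PC * \<rho>') = 1"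

text \<open>ST_B(C) for H = H_A (x) H_B, dim H_A = dA, dim H_B = dB, PC the projector onto C.\<close>
definition ST_B :: "nat \<Rightarrow> nat \<Rightarrow> complex mat \<Rightarrow> complex mat set" where
  "ST_B dA dB PC = {\<rho>. density (dA*dB) \<rho> \<and>
     (\<exists>\<rho>'. state_in (dA*dB) PC \<rho>' \<and> ptrace2 dB \<rho> = ptrace2 dB \<rho>')}"

text \<open>Outcome of the experiment: sigma on L (x) Aux (dim Aux = dX), encode with E (x) I,
  apply the operation I_A (x) Phi with Phi a quantum operation on H_B (x) Aux, trace out Aux.\<close>
definition experiment_outcome ::
  "nat \<Rightarrow> complex mat \<Rightarrow> nat \<Rightarrow> complex mat \<Rightarrow> complex mat list \<Rightarrow> complex mat" where
  "experiment_outcome dA E dX \<sigma> Ks =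
     (let enc = kron E (1\<^sub>m dX) * \<sigma> * adj (kron E (1\<^sub>m dX)) in
      ptrace2 dX (apply_kraus (dim_row E * dX) (map (\<lambda>K. kron (1\<^sub>m dA) K) Ks) enc))"

end

theory Submission
  imports Defs
begin

(* Both inclusions are statements about marginals.

   If a state arises from the experiment, tracing out H_B and Aux from the final state of
   H_A (x) H_B (x) Aux undoes the operation I_A (x) Phi, because Phi is trace preserving. Hence the
   corrupted codeword has the same H_A-marginal as the encoded state
   rho' = Tr_Aux ((E (x) I) sigma (E (x) I)^* ) = E (Tr_Aux sigma) E^*, which lies in C.

   Conversely, let rho and a state rho' in C have the same H_A-marginal. Writing
   rho = sum_k |v_k><v_k| and rho' = sum_k |w_k><w_k| purifies both over Aux = C^n, n = dim H:
   Psi = sum_k v_k (x) e_k and Phi = sum_k w_k (x) e_k. Every w_k lies in C = range E, so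
   Phi = (E (x) I) s for a unit vector s of L (x) Aux. Equality of the H_A-marginals says that
   the H_A-blocks of Phi and Psi, vectors of H_B (x) Aux, have the same Gram matrix, so a partial
   isometry K of H_B (x) Aux maps the blocks of Phi onto those of Psi. With Kraus operators K and
   1 - K^*K it becomes a quantum operation, and the experiment with sigma = |s><s| produces rho. *)

lemma dim_adj [simp]: "dim_row (adj A) = dim_col A" "dim_col (adj A) = dim_row A"
  by (auto simp: adj_def)

lemma adj_carrier [simp]: "A \<in> carrier_mat n m \<Longrightarrow> adj A \<in> carrier_mat m n"
  by (auto simp: adj_def)

lemma index_adj [simp]: "i < dim_col A \<Longrightarrow> j < dim_row A \<Longrightarrow> adj A $$ (i,j) = cnj (A $$ (j,i))"
  by (auto simp: adj_def)

lemma adj_adj [simp]: "adj (adj A) = A"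
  by (rule eq_matI) auto

lemma adj_mult:
  assumes "A \<in> carrier_mat n m" "B \<in> carrier_mat m p"
  shows "adj (A * B) = adj B * adj A"
  using assms by (intro eq_matI) (auto simp: scalar_prod_def mult.commute)

lemma adj_add:
  assumes "A \<in> carrier_mat n m" "B \<in> carrier_mat n m"
  shows "adj (A + B) = adj A + adj B"
  using assms by (intro eq_matI) auto

lemma adj_minus:
  assumes "A \<in> carrier_mat n m" "B \<in> carrier_mat n m"
  shows "adj (A - B) = adj A - adj B"
  using assms by (intro eq_matI) auto

lemma adj_one [simp]: "adj (1\<^sub>m n) = 1\<^sub>m n"
  by (intro eq_matI) auto

lemma adj_smult: "adj (c \<cdot>\<^sub>m A) = cnj c \<cdot>\<^sub>m adj A"
  by (intro eq_matI) auto

lemma eq_mat_by_mult_vecI: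
  fixes A B :: "complex mat"
  assumes A: "A \<in> carrier_mat n m" and B: "B \<in> carrier_mat n m"
    and eq: "\<And>x. x \<in> carrier_vec m \<Longrightarrow> A *\<^sub>v x = B *\<^sub>v x"
  shows "A = B"
proof (rule eq_matI)
  fix i j assume i: "i < dim_row B" and j: "j < dim_col B"
  have "\<And>C :: complex mat. C \<in> carrier_mat n m \<Longrightarrow> i < n \<Longrightarrow> j < m \<Longrightarrow>
      (C *\<^sub>v unit_vec m j) $ i = C $$ (i,j)"
    by (auto simp: scalar_prod_def unit_vec_def if_distrib cong: if_cong)
  then show "A $$ (i,j) = B $$ (i,j)"
    using eq[of "unit_vec m j"] A B i j by (metis carrier_matD unit_vec_carrier)
qed (use A B in auto)

lemma smult_mat_mult_vec:
  "A \<in> carrier_mat n m \<Longrightarrow> x \<in> carrier_vec m \<Longrightarrow> (c \<cdot>\<^sub>m (A::complex mat)) *\<^sub>v x = c \<cdot>\<^sub>v (A *\<^sub>v x)"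
  by (intro eq_vecI) (auto simp: scalar_prod_def sum_distrib_left mult_ac)

lemma smult_zero_vec_right [simp]: "(c::complex) \<cdot>\<^sub>v 0\<^sub>v n = 0\<^sub>v n"
  by (intro eq_vecI) auto

lemma zero_smult_vec [simp]: "v \<in> carrier_vec n \<Longrightarrow> (0::complex) \<cdot>\<^sub>v v = 0\<^sub>v n"
  by (intro eq_vecI) auto

lemma kronecker_delta_simps [simp]:
  "(if P then (1::complex) else 0) * x = (if P then x else 0)"
  "x * (if P then (1::complex) else 0) = (if P then x else 0)"
  "cnj (if P then (1::complex) else 0) = (if P then 1 else 0)"
  by auto

lemma mult_unit_vec_col: "(M::complex mat) \<in> carrier_mat n n \<Longrightarrow> l < n \<Longrightarrow> M *\<^sub>v unit_vec n l = col M l"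
  by (intro eq_vecI) (auto simp: scalar_prod_def unit_vec_def if_distrib[of "(*) _"] cong: if_cong)

text \<open>The inner product is linear in the first and antilinear in the second argument.\<close>

definition cinner :: "complex vec \<Rightarrow> complex vec \<Rightarrow> complex" where
  "cinner x y = (\<Sum>i<dim_vec x. x $ i * cnj (y $ i))"

definition outer_prod :: "complex vec \<Rightarrow> complex vec \<Rightarrow> complex mat" where
  "outer_prod x y = mat (dim_vec x) (dim_vec y) (\<lambda>(i,j). x $ i * cnj (y $ j))"

lemma cinner_adj:
  assumes A: "A \<in> carrier_mat n m" and x: "x \<in> carrier_vec m" and y: "y \<in> carrier_vec n"
  shows "cinner (A *\<^sub>v x) y = cinner x (adj A *\<^sub>v y)"
proof -
  have "cinner (A *\<^sub>v x) y = (\<Sum>i<n. (\<Sum>j<m. A $$ (i,j) * x $ j) * cnj (y $ i))"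
    using assms by (simp add: cinner_def scalar_prod_def atLeast0LessThan)
  also have "\<dots> = (\<Sum>j<m. x $ j * (\<Sum>i<n. A $$ (i,j) * cnj (y $ i)))"
    by (simp add: sum_distrib_left sum_distrib_right sum.swap[of _ "{..<n}"] mult_ac)
  also have "\<dots> = cinner x (adj A *\<^sub>v y)"
    using assms by (simp add: cinner_def scalar_prod_def atLeast0LessThan mult_ac)
  finally show ?thesis .
qed

lemma cinner_isometry:
  assumes E: "E \<in> carrier_mat n l" and iso: "adj E * E = 1\<^sub>m l" and u: "u \<in> carrier_vec l"
  shows "cinner (E *\<^sub>v u) (E *\<^sub>v u) = cinner u u"
  using cinner_adj[OF E u, of "E *\<^sub>v u"] assoc_mult_mat_vec[OF adj_carrier[OF E] E u] iso E u by simp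

lemma cinner_commute: "dim_vec x = dim_vec y \<Longrightarrow> cnj (cinner x y) = cinner y x"
  by (simp add: cinner_def mult.commute)

lemma cinner_add_left:
  "x \<in> carrier_vec n \<Longrightarrow> y \<in> carrier_vec n \<Longrightarrow> cinner (x + y) z = cinner x z + cinner y z"
  by (auto simp: cinner_def algebra_simps sum.distrib)

lemma cinner_add_right:
  "x \<in> carrier_vec n \<Longrightarrow> y \<in> carrier_vec n \<Longrightarrow> z \<in> carrier_vec n \<Longrightarrow>
    cinner z (x + y) = cinner z x + cinner z y"
  by (auto simp: cinner_def algebra_simps sum.distrib)

lemma cinner_diff_left:
  "x \<in> carrier_vec n \<Longrightarrow> y \<in> carrier_vec n \<Longrightarrow> cinner (x - y) z = cinner x z - cinner y z"
  by (auto simp: cinner_def algebra_simps sum_subtractf)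

lemma cinner_diff_right:
  "x \<in> carrier_vec n \<Longrightarrow> y \<in> carrier_vec n \<Longrightarrow> z \<in> carrier_vec n \<Longrightarrow>
    cinner z (x - y) = cinner z x - cinner z y"
  by (auto simp: cinner_def algebra_simps sum_subtractf)

lemma cinner_smult_left: "cinner (c \<cdot>\<^sub>v x) z = c * cinner x z"
  by (auto simp: cinner_def algebra_simps sum_distrib_left)

lemma cinner_smult_right:
  "z \<in> carrier_vec n \<Longrightarrow> x \<in> carrier_vec n \<Longrightarrow> cinner z (c \<cdot>\<^sub>v x) = cnj c * cinner z x"
  by (auto simp: cinner_def algebra_simps sum_distrib_left)

lemma cinner_zero_right [simp]: "z \<in> carrier_vec n \<Longrightarrow> cinner z (0\<^sub>v n) = 0"
  by (auto simp: cinner_def)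

lemma cinner_unit_vec_right:
  assumes "x \<in> carrier_vec n" "i < n"
  shows "cinner x (unit_vec n i) = x $ i"
proof -
  have "cinner x (unit_vec n i) = (\<Sum>t<n. if t = i then x $ i else 0)"
    using assms unfolding cinner_def by (intro sum.cong) auto
  then show ?thesis using assms by simp
qed

lemma cinner_unit_vec_left:
  assumes "x \<in> carrier_vec n" "i < n"
  shows "cinner (unit_vec n i) x = cnj (x $ i)"
proof -
  have "cinner (unit_vec n i) x = (\<Sum>t<n. if t = i then cnj (x $ i) else 0)"
    using assms unfolding cinner_def by (intro sum.cong) auto
  then show ?thesis using assms by simp
qed

lemma cinner_mult_unit_vec:
  "(M::complex mat) \<in> carrier_mat n n \<Longrightarrow> l < n \<Longrightarrow> i < n \<Longrightarrow>
    cinner (M *\<^sub>v unit_vec n l) (unit_vec n i) = M $$ (i,l)"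
  by (simp add: mult_unit_vec_col cinner_unit_vec_right)

lemma cinner_self: "cinner x x = of_real (\<Sum>i<dim_vec x. (cmod (x $ i))\<^sup>2)"
  unfolding cinner_def of_real_sum
  by (intro sum.cong refl) (simp add: complex_norm_square del: of_real_power)

lemma cinner_self_real: "Im (cinner x x) = 0"
  unfolding cinner_self by simp

lemma cinner_self_eq_0:
  assumes "x \<in> carrier_vec n"
  shows "cinner x x = 0 \<longleftrightarrow> x = 0\<^sub>v n"
proof
  assume "cinner x x = 0"
  then have "(\<Sum>i<dim_vec x. (cmod (x $ i))\<^sup>2) = 0"
    by (metis cinner_self of_real_eq_0_iff)
  then have "\<forall>i\<in>{..<dim_vec x}. (cmod (x $ i))\<^sup>2 = 0"
    by (subst sum_nonneg_eq_0_iff[symmetric]) auto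
  then show "x = 0\<^sub>v n" using assms by (intro eq_vecI) auto
qed (auto simp: cinner_def)

lemma outer_prod_carrier [simp]: "outer_prod x y \<in> carrier_mat (dim_vec x) (dim_vec y)"
  by (simp add: outer_prod_def)

lemma dim_outer_prod [simp]:
  "dim_row (outer_prod x y) = dim_vec x" "dim_col (outer_prod x y) = dim_vec y"
  by (auto simp: outer_prod_def)

lemma index_outer_prod [simp]:
  "i < dim_vec x \<Longrightarrow> j < dim_vec y \<Longrightarrow> outer_prod x y $$ (i,j) = x $ i * cnj (y $ j)"
  by (simp add: outer_prod_def)

lemma outer_prod_mult_vec:
  "z \<in> carrier_vec (dim_vec y) \<Longrightarrow> outer_prod x y *\<^sub>v z = cinner z y \<cdot>\<^sub>v x"
  by (intro eq_vecI)
    (auto simp: cinner_def scalar_prod_def atLeast0LessThan sum_distrib_left mult_ac)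

lemma adj_outer_prod [simp]: "adj (outer_prod x y) = outer_prod y x"
  by (intro eq_matI) auto

lemma mult_outer_prod:
  "A \<in> carrier_mat n m \<Longrightarrow> x \<in> carrier_vec m \<Longrightarrow> A * outer_prod x y = outer_prod (A *\<^sub>v x) y"
  by (intro eq_matI) (auto simp: scalar_prod_def sum_distrib_right sum_distrib_left mult_ac)

lemma outer_prod_mult:
  "y \<in> carrier_vec m \<Longrightarrow> A \<in> carrier_mat m p \<Longrightarrow> outer_prod x y * A = outer_prod x (adj A *\<^sub>v y)"
  by (intro eq_matI) (auto simp: scalar_prod_def sum_distrib_left mult_ac)

lemma conj_outer_prod:
  assumes A: "A \<in> carrier_mat m N" and x: "x \<in> carrier_vec N"
  shows "A * outer_prod x x * adj A = outer_prod (A *\<^sub>v x) (A *\<^sub>v x)"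
  using mult_outer_prod[OF A x] outer_prod_mult[OF x adj_carrier[OF A]] by simp

lemma tr_outer_prod: "tr (outer_prod x x) = cinner x x"
  by (simp add: tr_def cinner_def)

lemma tr_add: "A \<in> carrier_mat N N \<Longrightarrow> B \<in> carrier_mat N N \<Longrightarrow> tr (A + B) = tr A + tr B"
  by (simp add: tr_def sum.distrib)

lemma tr_minus: "A \<in> carrier_mat N N \<Longrightarrow> B \<in> carrier_mat N N \<Longrightarrow> tr (A - B) = tr A - tr B"
  by (simp add: tr_def sum_subtractf)

lemma tr_mult_commute:
  assumes "A \<in> carrier_mat n m" "B \<in> carrier_mat m n"
  shows "tr (A * B) = tr (B * A)"
proof -
  have "tr (A * B) = (\<Sum>i<n. \<Sum>j<m. A $$ (i,j) * B $$ (j,i))"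
    using assms by (simp add: tr_def scalar_prod_def lessThan_atLeast0)
  also have "\<dots> = (\<Sum>j<m. \<Sum>i<n. B $$ (j,i) * A $$ (i,j))"
    by (subst sum.swap) (simp add: mult.commute)
  also have "\<dots> = tr (B * A)"
    using assms by (simp add: tr_def scalar_prod_def lessThan_atLeast0)
  finally show ?thesis .
qed

lemma tr_conj_isometry:
  assumes E: "E \<in> carrier_mat n l" and iso: "adj E * E = 1\<^sub>m l" and T: "T \<in> carrier_mat l l"
  shows "tr (E * T * adj E) = tr T"
proof -
  have aE: "adj E \<in> carrier_mat l n" using E by simp
  have "tr (E * T * adj E) = tr (E * (T * adj E))" using assoc_mult_mat[OF E T aE] by simp
  also have "\<dots> = tr (T * adj E * E)" using tr_mult_commute[OF E] T aE by simp
  also have "\<dots> = tr (T * (adj E * E))" using assoc_mult_mat[OF T aE E] by simp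
  finally show ?thesis using iso T by simp
qed

lemma msum_carrier [simp]: "msum N Ms \<in> carrier_mat N N"
  by (simp add: msum_def)

lemma index_msum [simp]: "i < N \<Longrightarrow> j < N \<Longrightarrow> msum N Ms $$ (i,j) = (\<Sum>M\<leftarrow>Ms. M $$ (i,j))"
  by (simp add: msum_def)

lemma dim_msum [simp]: "dim_row (msum N Ms) = N" "dim_col (msum N Ms) = N"
  by (auto simp: msum_def)

lemma msum_Nil: "msum N [] = 0\<^sub>m N N"
  by (intro eq_matI) auto

lemma msum_Cons: "M \<in> carrier_mat N N \<Longrightarrow> msum N (M # Ms) = M + msum N Ms"
  by (intro eq_matI) auto

lemma tr_msum: "\<forall>M\<in>set Ms. M \<in> carrier_mat N N \<Longrightarrow> tr (msum N Ms) = (\<Sum>M\<leftarrow>Ms. tr M)"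
proof (induction Ms)
  case Nil
  then show ?case by (simp add: msum_Nil tr_def)
next
  case (Cons M Ms)
  then show ?case using tr_add[of M N "msum N Ms"] by (simp add: msum_Cons)
qed

lemma mult_msum_mult:
  assumes Ms: "\<forall>M\<in>set Ms. M \<in> carrier_mat N N"
    and A: "A \<in> carrier_mat r N" and B: "B \<in> carrier_mat N c"
  shows "A * msum N Ms * B = mat r c (\<lambda>(i,j). \<Sum>M\<leftarrow>Ms. (A * M * B) $$ (i,j))"
  using Ms
proof (induction Ms)
  case Nil
  show ?case using A B by (intro eq_matI) (auto simp: msum_Nil)
next
  case (Cons M Ms)
  have M: "M \<in> carrier_mat N N" using Cons.prems by simp
  have S: "msum N Ms \<in> carrier_mat N N" by simp
  have "A * msum N (M # Ms) * B = A * M * B + A * msum N Ms * B"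
  proof -
    have "A * (M + msum N Ms) = A * M + A * msum N Ms" by (rule mult_add_distrib_mat[OF A M S])
    moreover have "(A * M + A * msum N Ms) * B = A * M * B + A * msum N Ms * B"
      by (rule add_mult_distrib_mat[OF _ _ B]) (use A M S in auto)
    ultimately show ?thesis using M by (simp add: msum_Cons)
  qed
  with Cons A B M show ?case by (intro eq_matI) auto
qed

lemma orth_proj_mult_vec_idem:
  "orth_proj N P \<Longrightarrow> x \<in> carrier_vec N \<Longrightarrow> P *\<^sub>v (P *\<^sub>v x) = P *\<^sub>v x"
  by (metis assoc_mult_mat_vec orth_proj_def)

lemma one_minus_mult_vec:
  "(P :: complex mat) \<in> carrier_mat N N \<Longrightarrow> x \<in> carrier_vec N \<Longrightarrow> (1\<^sub>m N - P) *\<^sub>v x = x - P *\<^sub>v x"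
  using minus_mult_distrib_mat_vec[of "1\<^sub>m N" N N P x] by simp

lemma orth_proj_complement:
  assumes P: "orth_proj N P"
  shows "orth_proj N (1\<^sub>m N - P)"
proof -
  have Pc: "P \<in> carrier_mat N N" and aP: "adj P = P" using P by (auto simp: orth_proj_def)
  have "(1\<^sub>m N - P) * (1\<^sub>m N - P) = 1\<^sub>m N - P"
  proof (rule eq_mat_by_mult_vecI[of _ N N])
    fix x :: "complex vec" assume x: "x \<in> carrier_vec N"
    have Px: "P *\<^sub>v x \<in> carrier_vec N" using Pc x by simp
    have "(1\<^sub>m N - P) * (1\<^sub>m N - P) *\<^sub>v x = (1\<^sub>m N - P) *\<^sub>v ((1\<^sub>m N - P) *\<^sub>v x)"
      by (rule assoc_mult_mat_vec[of _ N N _ N]) (use Pc x in auto)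
    also have "\<dots> = (x - P *\<^sub>v x) - P *\<^sub>v (x - P *\<^sub>v x)"
      using Pc x Px by (simp add: one_minus_mult_vec)
    also have "\<dots> = x - P *\<^sub>v x"
      using mult_minus_distrib_mat_vec[OF Pc x Px] orth_proj_mult_vec_idem[OF P x] x Px
      by (intro eq_vecI) auto
    finally show "(1\<^sub>m N - P) * (1\<^sub>m N - P) *\<^sub>v x = (1\<^sub>m N - P) *\<^sub>v x"
      using Pc x by (simp add: one_minus_mult_vec)
  qed (use Pc in auto)
  then show ?thesis
    using Pc aP adj_minus[of "1\<^sub>m N" N N P] minus_carrier_mat[OF Pc] by (simp add: orth_proj_def)
qed

lemma orth_proj_fixes_range:
  assumes P: "orth_proj N P" and E: "E \<in> carrier_mat N l"
    and range: "(\<lambda>v. E *\<^sub>v v) ` carrier_vec l \<subseteq> {P *\<^sub>v v | v. v \<in> carrier_vec N}"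
  shows "P * E = E"
proof (rule eq_mat_by_mult_vecI[of _ N l])
  have Pc: "P \<in> carrier_mat N N" using P by (simp add: orth_proj_def)
  then show "P * E \<in> carrier_mat N l" using E by simp
  fix x :: "complex vec" assume x: "x \<in> carrier_vec l"
  then obtain v where v: "v \<in> carrier_vec N" and Ex: "E *\<^sub>v x = P *\<^sub>v v" using range by blast
  have "(P * E) *\<^sub>v x = P *\<^sub>v (E *\<^sub>v x)" using Pc E x by simp
  also have "\<dots> = E *\<^sub>v x" using Ex orth_proj_mult_vec_idem[OF P v] by simp
  finally show "(P * E) *\<^sub>v x = E *\<^sub>v x" .
qed (use E in simp)

definition quad_form :: "complex mat \<Rightarrow> complex vec \<Rightarrow> complex" where
  "quad_form M v = cinner (M *\<^sub>v v) v"

lemma psd_iff_quad_form: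
  "psd n M \<longleftrightarrow> M \<in> carrier_mat n n \<and> (\<forall>v\<in>carrier_vec n. Im (quad_form M v) = 0 \<and> 0 \<le> Re (quad_form M v))"
proof -
  have "M \<in> carrier_mat n n \<Longrightarrow> v \<in> carrier_vec n \<Longrightarrow>
      (\<Sum>i<n. cnj (v $ i) * (M *\<^sub>v v) $ i) = quad_form M v" for v
    by (simp add: quad_form_def cinner_def mult.commute)
  then show ?thesis unfolding psd_def Let_def by metis
qed

lemma quad_form_add:
  assumes M: "M \<in> carrier_mat n n" and a: "a \<in> carrier_vec n" and b: "b \<in> carrier_vec n"
  shows "quad_form M (a + b) = quad_form M a + cinner (M *\<^sub>v a) b + cinner (M *\<^sub>v b) a + quad_form M b"
proof -
  have Ma: "M *\<^sub>v a \<in> carrier_vec n" and Mb: "M *\<^sub>v b \<in> carrier_vec n" using M a b by auto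
  show ?thesis unfolding quad_form_def mult_add_distrib_mat_vec[OF M a b]
    using cinner_add_left[OF Ma Mb] cinner_add_right[OF a b] Ma Mb by simp
qed

lemma quad_form_add_mat:
  "A \<in> carrier_mat N N \<Longrightarrow> B \<in> carrier_mat N N \<Longrightarrow> v \<in> carrier_vec N \<Longrightarrow>
    quad_form (A + B) v = quad_form A v + quad_form B v"
  by (simp add: quad_form_def add_mult_distrib_mat_vec cinner_add_left[of _ N])

definition hermitian_psd :: "nat \<Rightarrow> complex mat \<Rightarrow> bool" where
  "hermitian_psd N M \<longleftrightarrow> M \<in> carrier_mat N N \<and> adj M = M \<and> psd N M"

lemma density_iff_hermitian_psd: "density N M \<longleftrightarrow> hermitian_psd N M \<and> tr M = 1"
  by (auto simp: density_def hermitian_psd_def)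

lemma hermitian_psd_add: "hermitian_psd N A \<Longrightarrow> hermitian_psd N B \<Longrightarrow> hermitian_psd N (A + B)"
  by (auto simp: hermitian_psd_def psd_iff_quad_form adj_add quad_form_add_mat)

lemma hermitian_psd_zero: "hermitian_psd N (0\<^sub>m N N)"
  by (auto simp: hermitian_psd_def psd_iff_quad_form quad_form_def cinner_def scalar_prod_def)

lemma conj_carrier [simp]:
  "K \<in> carrier_mat n m \<Longrightarrow> M \<in> carrier_mat m m \<Longrightarrow> K * M * adj K \<in> carrier_mat n n"
  by (metis adj_carrier mult_carrier_mat)

lemma hermitian_psd_conj:
  assumes M: "hermitian_psd m M" and K: "K \<in> carrier_mat N m"
  shows "hermitian_psd N (K * M * adj K)"
proof -
  have Mc: "M \<in> carrier_mat m m" and hM: "adj M = M" and pM: "psd m M"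
    using M by (auto simp: hermitian_psd_def)
  have aK: "adj K \<in> carrier_mat m N" using K by simp
  have herm: "adj (K * M * adj K) = K * M * adj K"
    using adj_mult[of "K * M" N m "adj K" N] adj_mult[OF K Mc] hM K Mc aK
    by (simp add: assoc_mult_mat[of K N m M m "adj K" N])
  have quad: "quad_form (K * M * adj K) v = quad_form M (adj K *\<^sub>v v)" if v: "v \<in> carrier_vec N" for v
  proof -
    have Kv: "adj K *\<^sub>v v \<in> carrier_vec m" using aK v by simp
    have "(K * M * adj K) *\<^sub>v v = K *\<^sub>v (M *\<^sub>v (adj K *\<^sub>v v))"
      using K Mc aK v by (simp add: assoc_mult_mat_vec[of _ N m _ N] assoc_mult_mat_vec[OF K Mc Kv])
    then show ?thesis
      using cinner_adj[OF K _ v, of "M *\<^sub>v (adj K *\<^sub>v v)"] Mc Kv by (simp add: quad_form_def)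
  qed
  show ?thesis unfolding hermitian_psd_def psd_iff_quad_form
  proof (intro conjI ballI)
    fix v :: "complex vec" assume v: "v \<in> carrier_vec N"
    have "adj K *\<^sub>v v \<in> carrier_vec m" using aK v by simp
    then show "Im (quad_form (K * M * adj K) v) = 0" "0 \<le> Re (quad_form (K * M * adj K) v)"
      using pM quad[OF v] unfolding psd_iff_quad_form by auto
  qed (use herm K Mc in auto)
qed

lemma hermitian_psd_msum: "\<forall>M\<in>set Ms. hermitian_psd N M \<Longrightarrow> hermitian_psd N (msum N Ms)"
proof (induction Ms)
  case Nil
  then show ?case by (simp add: msum_Nil hermitian_psd_zero)
next
  case (Cons M Ms)
  then show ?case
    using hermitian_psd_add[of N M "msum N Ms"] by (simp add: msum_Cons hermitian_psd_def)
qed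

lemma hermitian_psd_apply_kraus:
  "hermitian_psd m M \<Longrightarrow> \<forall>K\<in>set Ks. K \<in> carrier_mat N m \<Longrightarrow> hermitian_psd N (apply_kraus N Ks M)"
  unfolding apply_kraus_def by (rule hermitian_psd_msum) (auto intro: hermitian_psd_conj)

lemma density_outer_prod:
  assumes s: "s \<in> carrier_vec N" and unit: "cinner s s = 1"
  shows "density N (outer_prod s s)"
proof -
  have "quad_form (outer_prod s s) v = cinner v s * cnj (cinner v s)" if v: "v \<in> carrier_vec N" for v
    using outer_prod_mult_vec[of v s s] cinner_commute[of v s] v s
    by (simp add: quad_form_def cinner_smult_left)
  then have "psd N (outer_prod s s)"
    using s unfolding psd_iff_quad_form by (auto simp: complex_mult_cnj)
  then show ?thesis using s unit outer_prod_carrier[of s s] by (simp add: density_def tr_outer_prod)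
qed

section \<open>Positive semidefinite matrices as sums of rank-one projections\<close>

definition sum_outer_prod :: "nat \<Rightarrow> nat set \<Rightarrow> (nat \<Rightarrow> complex vec) \<Rightarrow> complex mat" where
  "sum_outer_prod n K w = mat n n (\<lambda>(i,j). \<Sum>k\<in>K. w k $ i * cnj (w k $ j))"

lemma sum_outer_prod_carrier [simp]: "sum_outer_prod n K w \<in> carrier_mat n n"
  by (simp add: sum_outer_prod_def)

lemma hermitian_entry: "hermitian_psd n M \<Longrightarrow> i < n \<Longrightarrow> j < n \<Longrightarrow> M $$ (i,j) = cnj (M $$ (j,i))"
  by (metis carrier_matD hermitian_psd_def index_adj)

lemma hermitian_psd_diag_zero:
  assumes M: "hermitian_psd n M" and k: "k < n" and j: "j < n" and z: "M $$ (k,k) = 0"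
  shows "M $$ (k,j) = 0"
proof (rule ccontr)
  assume nz: "M $$ (k,j) \<noteq> 0"
  have Mc: "M \<in> carrier_mat n n" and psd: "psd n M" using M by (auto simp: hermitian_psd_def)
  define b where "b = M $$ (j,k)"
  have "b \<noteq> 0" using nz hermitian_entry[OF M k j] by (simp add: b_def)
  define p where "p = Re (b * cnj b)"
  have p: "p > 0" using \<open>b \<noteq> 0\<close>
    by (simp add: p_def complex_mult_cnj sum_power2_gt_zero_iff complex_eq_iff)
  text \<open>The test vector \<open>e\<^sub>j + y e\<^sub>k\<close> with \<open>y = -t cnj b\<close> and \<open>t\<close> large has negative quadratic form.\<close>
  define t :: real where "t = (Re (M $$ (j,j)) + 1) / p"
  define y where "y = - complex_of_real t * cnj b"
  define e1 :: "complex vec" where "e1 = unit_vec n j"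
  define e2 :: "complex vec" where "e2 = y \<cdot>\<^sub>v unit_vec n k"
  have e1: "e1 \<in> carrier_vec n" and e2: "e2 \<in> carrier_vec n" by (auto simp: e1_def e2_def)
  have "quad_form M (e1 + e2) = quad_form M e1 + cinner (M *\<^sub>v e1) e2 + cinner (M *\<^sub>v e2) e1 + quad_form M e2"
    by (rule quad_form_add[OF Mc e1 e2])
  also have "quad_form M e1 = M $$ (j,j)"
    unfolding quad_form_def e1_def using cinner_mult_unit_vec[OF Mc j j] .
  also have "quad_form M e2 = 0"
    unfolding quad_form_def e2_def using Mc k z
    by (simp add: mult_mat_vec cinner_smult_left cinner_smult_right[of _ n] cinner_mult_unit_vec)
  also have "cinner (M *\<^sub>v e1) e2 = cnj y * cnj b"
    unfolding e1_def e2_def using Mc k j hermitian_entry[OF M k j]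
    by (simp add: cinner_smult_right[of _ n] cinner_mult_unit_vec b_def)
  also have "cinner (M *\<^sub>v e2) e1 = y * b"
    unfolding e1_def e2_def using Mc k j
    by (simp add: mult_mat_vec cinner_smult_left cinner_mult_unit_vec b_def)
  finally have q: "quad_form M (e1 + e2) = M $$ (j,j) + cnj y * cnj b + y * b" by simp
  have "Re (cnj y * cnj b) = - t * p" and "Re (y * b) = - t * p"
    by (simp_all add: y_def p_def algebra_simps)
  then have "Re (quad_form M (e1 + e2)) = Re (M $$ (j,j)) - 2 * (t * p)" using q by simp
  also have "t * p = Re (M $$ (j,j)) + 1" using p by (simp add: t_def)
  finally have "Re (quad_form M (e1 + e2)) = - Re (M $$ (j,j)) - 2" by simp
  moreover have "0 \<le> Re (quad_form M (unit_vec n j))" and "0 \<le> Re (quad_form M (e1 + e2))"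
    using psd e1 e2 unfolding psd_iff_quad_form by auto
  moreover have "quad_form M (unit_vec n j) = M $$ (j,j)"
    unfolding quad_form_def using cinner_mult_unit_vec[OF Mc j j] .
  ultimately show False by simp
qed

text \<open>\<open>M - w w\<^sup>*\<close> is the Schur complement of \<open>M\<close> with respect to the pivot \<open>k\<close>.\<close>

lemma quad_form_minus_pivot:
  assumes M: "hermitian_psd n M" and k: "k < n"
    and s: "s * s = M $$ (k,k)" "s \<noteq> 0" "cnj s = s"
    and w: "w = (1 / s) \<cdot>\<^sub>v col M k" and v: "v \<in> carrier_vec n"
  shows "quad_form (M - outer_prod w w) v
    = quad_form M (v + (- (M *\<^sub>v v) $ k / (s * s)) \<cdot>\<^sub>v unit_vec n k)"
proof -
  have Mc: "M \<in> carrier_mat n n" and herm: "adj M = M" using M by (auto simp: hermitian_psd_def)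
  have wc: "w \<in> carrier_vec n" unfolding w using col_carrier_vec[OF k Mc] by simp
  have O: "outer_prod w w \<in> carrier_mat n n" using outer_prod_carrier[of w w] wc by simp
  have colk: "col M k = M *\<^sub>v unit_vec n k" using mult_unit_vec_col[OF Mc k] by simp
  have e: "unit_vec n k \<in> carrier_vec n" by simp
  have Mv: "M *\<^sub>v v \<in> carrier_vec n" using Mc v by simp
  define \<beta> where "\<beta> = (M *\<^sub>v v) $ k"
  define \<gamma> where "\<gamma> = - \<beta> / (s * s)"
  have Me_v: "cinner (M *\<^sub>v unit_vec n k) v = cnj \<beta>"
    using cinner_adj[OF Mc e v] herm cinner_unit_vec_left[OF Mv k] by (simp add: \<beta>_def)
  have v_Me: "cinner v (M *\<^sub>v unit_vec n k) = \<beta>"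
    using cinner_commute[of v "M *\<^sub>v unit_vec n k"] Me_v v Mc by simp
  have "cinner v w = \<beta> / s"
    unfolding w colk using cinner_smult_right[of v n "M *\<^sub>v unit_vec n k"] v Mc v_Me s by simp
  moreover have "cinner w v = cnj \<beta> / s"
    unfolding w colk using cinner_smult_left Me_v by simp
  moreover have "quad_form (M - outer_prod w w) v = quad_form M v - cinner v w * cinner w v"
    using minus_mult_distrib_mat_vec[OF Mc O v] outer_prod_mult_vec[of v w w] v wc
      cinner_diff_left[OF Mv, of "cinner v w \<cdot>\<^sub>v w" v]
    by (simp add: quad_form_def cinner_smult_left)
  ultimately have lhs: "quad_form (M - outer_prod w w) v = quad_form M v - \<beta> * cnj \<beta> / (s * s)"
    by simp
  have ge: "\<gamma> \<cdot>\<^sub>v unit_vec n k \<in> carrier_vec n" by simp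
  have "quad_form M (v + \<gamma> \<cdot>\<^sub>v unit_vec n k) = quad_form M v + cinner (M *\<^sub>v v) (\<gamma> \<cdot>\<^sub>v unit_vec n k)
      + cinner (M *\<^sub>v (\<gamma> \<cdot>\<^sub>v unit_vec n k)) v + quad_form M (\<gamma> \<cdot>\<^sub>v unit_vec n k)"
    by (rule quad_form_add[OF Mc v ge])
  also have "cinner (M *\<^sub>v v) (\<gamma> \<cdot>\<^sub>v unit_vec n k) = cnj \<gamma> * \<beta>"
    using cinner_smult_right[OF Mv e] cinner_unit_vec_right[OF Mv k] by (simp add: \<beta>_def)
  also have "cinner (M *\<^sub>v (\<gamma> \<cdot>\<^sub>v unit_vec n k)) v = \<gamma> * cnj \<beta>"
    using mult_mat_vec[OF Mc e] cinner_smult_left Me_v by simp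
  also have "quad_form M (\<gamma> \<cdot>\<^sub>v unit_vec n k) = \<gamma> * cnj \<gamma> * M $$ (k,k)"
    unfolding quad_form_def using mult_mat_vec[OF Mc e] cinner_mult_unit_vec[OF Mc k k] Mc
    by (simp add: cinner_smult_left cinner_smult_right[of _ n])
  finally have "quad_form M (v + \<gamma> \<cdot>\<^sub>v unit_vec n k)
      = quad_form M v + cnj \<gamma> * \<beta> + \<gamma> * cnj \<beta> + \<gamma> * cnj \<gamma> * M $$ (k,k)" .
  also have "\<dots> = quad_form M v - \<beta> * cnj \<beta> / (s * s)"
    unfolding \<gamma>_def using s by (simp add: field_simps)
  finally show ?thesis using lhs by (simp add: \<gamma>_def \<beta>_def)
qed

lemma hermitian_psd_minus_pivot:
  assumes M: "hermitian_psd n M" and k: "k < n"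
    and s: "s * s = M $$ (k,k)" "s \<noteq> 0" "cnj s = s"
    and w: "w = (1 / s) \<cdot>\<^sub>v col M k"
  shows "hermitian_psd n (M - outer_prod w w)"
proof -
  have Mc: "M \<in> carrier_mat n n" and herm: "adj M = M" and psd: "psd n M"
    using M by (auto simp: hermitian_psd_def)
  have "w \<in> carrier_vec n" unfolding w using col_carrier_vec[OF k Mc] by simp
  then have O: "outer_prod w w \<in> carrier_mat n n" using outer_prod_carrier[of w w] by simp
  have "psd n (M - outer_prod w w)"
    unfolding psd_iff_quad_form
  proof (intro conjI ballI)
    fix v :: "complex vec" assume v: "v \<in> carrier_vec n"
    have "v + (- (M *\<^sub>v v) $ k / (s * s)) \<cdot>\<^sub>v unit_vec n k \<in> carrier_vec n" using v by simp
    then show "Im (quad_form (M - outer_prod w w) v) = 0" "0 \<le> Re (quad_form (M - outer_prod w w) v)"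
      using quad_form_minus_pivot[OF M k s w v] psd unfolding psd_iff_quad_form by auto
  qed (use minus_carrier_mat[OF O] in auto)
  then show ?thesis using minus_carrier_mat[OF O] herm adj_minus[OF Mc O] by (simp add: hermitian_psd_def)
qed

lemma hermitian_psd_split_pivot:
  assumes M: "hermitian_psd n M" and k: "k < n"
    and zero: "\<forall>i<n. \<forall>j<n. (i < k \<or> j < k) \<longrightarrow> M $$ (i,j) = 0"
  obtains w where "w \<in> carrier_vec n" "hermitian_psd n (M - outer_prod w w)"
    "\<forall>i<n. \<forall>j<n. (i < Suc k \<or> j < Suc k) \<longrightarrow> (M - outer_prod w w) $$ (i,j) = 0"
proof (cases "M $$ (k,k) = 0")
  case True
  have Mc: "M \<in> carrier_mat n n" using M by (simp add: hermitian_psd_def)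
  have "M - outer_prod (0\<^sub>v n) (0\<^sub>v n) = M" using Mc by (intro eq_matI) auto
  moreover have "M $$ (i,j) = 0" if "i < n" "j < n" "i = k \<or> j = k" for i j
  proof -
    have "M $$ (k,j) = 0" "M $$ (k,i) = 0" using hermitian_psd_diag_zero[OF M k _ True] that by auto
    then show ?thesis using that hermitian_entry[OF M, of i k] by auto
  qed
  ultimately show ?thesis using that[of "0\<^sub>v n"] M zero by (simp add: less_Suc_eq)
next
  case False
  have Mc: "M \<in> carrier_mat n n" using M by (simp add: hermitian_psd_def)
  have Mkk: "M $$ (k,k) = of_real (Re (M $$ (k,k)))"
    using hermitian_entry[OF M k k] by (simp add: complex_eq_iff)
  have "0 \<le> Re (quad_form M (unit_vec n k))" using M by (auto simp: hermitian_psd_def psd_iff_quad_form)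
  moreover have "Re (M $$ (k,k)) \<noteq> 0" using False Mkk by (metis of_real_0)
  ultimately have pos: "Re (M $$ (k,k)) > 0"
    using cinner_mult_unit_vec[OF Mc k k] by (simp add: quad_form_def)
  define s where "s = complex_of_real (sqrt (Re (M $$ (k,k))))"
  have s: "s * s = M $$ (k,k)" "s \<noteq> 0" "cnj s = s"
    using pos Mkk by (simp_all add: s_def flip: of_real_mult)
  define w where "w = (1 / s) \<cdot>\<^sub>v col M k"
  have wc: "w \<in> carrier_vec n" unfolding w_def using col_carrier_vec[OF k Mc] by simp
  have entry: "(M - outer_prod w w) $$ (i,j) = M $$ (i,j) - M $$ (i,k) * cnj (M $$ (j,k)) / M $$ (k,k)"
    if "i < n" "j < n" for i j
    using that k Mc wc s(2,3) by (simp add: w_def flip: s(1))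
  have "(M - outer_prod w w) $$ (i,j) = 0" if ij: "i < n" "j < n" "i < Suc k \<or> j < Suc k" for i j
  proof (cases "i = k \<or> j = k")
    case True
    have "M $$ (k,i) = cnj (M $$ (i,k))" "M $$ (k,j) = cnj (M $$ (j,k))"
      using hermitian_entry[OF M k] ij by auto
    then show ?thesis using entry[OF ij(1,2)] False True by auto
  next
    case False
    then have "i < k \<or> j < k" using ij by auto
    then show ?thesis using entry[OF ij(1,2)] zero ij k by auto
  qed
  then show ?thesis using that[OF wc hermitian_psd_minus_pivot[OF M k s w_def]] by blast
qed

lemma hermitian_psd_eq_sum_outer_prod_from:
  assumes "hermitian_psd n M" and "\<forall>i<n. \<forall>j<n. (i < k \<or> j < k) \<longrightarrow> M $$ (i,j) = 0"
  shows "\<exists>w. (\<forall>l. w l \<in> carrier_vec n) \<and> M = sum_outer_prod n {k..<n} w"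
  using assms
proof (induction "n - k" arbitrary: k M)
  case 0
  then have "M = sum_outer_prod n {k..<n} (\<lambda>_. 0\<^sub>v n)"
    by (intro eq_matI) (auto simp: hermitian_psd_def sum_outer_prod_def)
  then show ?case by (intro exI[of _ "\<lambda>_. 0\<^sub>v n"]) auto
next
  case (Suc m)
  then have k: "k < n" by simp
  obtain w where w: "w \<in> carrier_vec n" and M': "hermitian_psd n (M - outer_prod w w)"
    and zero': "\<forall>i<n. \<forall>j<n. (i < Suc k \<or> j < Suc k) \<longrightarrow> (M - outer_prod w w) $$ (i,j) = 0"
    using hermitian_psd_split_pivot[OF Suc.prems(1) k Suc.prems(2)] by blast
  obtain v where v: "\<forall>l. v l \<in> carrier_vec n"
    and decomp: "M - outer_prod w w = sum_outer_prod n {Suc k..<n} v"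
    using Suc.hyps(1)[of "Suc k" "M - outer_prod w w"] Suc.hyps(2) M' zero' by fastforce
  have "M = sum_outer_prod n {k..<n} (v(k := w))"
  proof (rule eq_matI)
    fix i j assume "i < dim_row (sum_outer_prod n {k..<n} (v(k := w)))"
      "j < dim_col (sum_outer_prod n {k..<n} (v(k := w)))"
    then have ij: "i < n" "j < n" by (auto simp: sum_outer_prod_def)
    have "M $$ (i,j) = w $ i * cnj (w $ j) + (M - outer_prod w w) $$ (i,j)"
      using ij w Suc.prems(1) by (simp add: hermitian_psd_def)
    also have "\<dots> = (\<Sum>l\<in>{k..<n}. (v(k := w)) l $ i * cnj ((v(k := w)) l $ j))"
      using ij k by (simp add: decomp sum_outer_prod_def atLeastSucLessThan_greaterThanLessThan
          sum.atLeast_Suc_lessThan)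
    finally show "M $$ (i,j) = sum_outer_prod n {k..<n} (v(k := w)) $$ (i,j)"
      using ij by (simp add: sum_outer_prod_def)
  qed (use Suc.prems(1) in \<open>auto simp: hermitian_psd_def sum_outer_prod_def\<close>)
  then show ?case using v w by (intro exI[of _ "v(k := w)"]) auto
qed

lemma hermitian_psd_eq_sum_outer_prod:
  assumes "hermitian_psd n M"
  obtains w where "\<forall>l. w l \<in> carrier_vec n" "M = sum_outer_prod n {..<n} w"
  using hermitian_psd_eq_sum_outer_prod_from[OF assms, of 0] that by (auto simp: atLeast0LessThan)

lemma tr_mult_sum_outer_prod:
  assumes A: "A \<in> carrier_mat n n" and w: "\<forall>k\<in>K. w k \<in> carrier_vec n"
  shows "tr (A * sum_outer_prod n K w) = (\<Sum>k\<in>K. cinner (A *\<^sub>v w k) (w k))"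
proof -
  have "tr (A * sum_outer_prod n K w) = (\<Sum>i<n. \<Sum>l<n. A $$ (i,l) * (\<Sum>k\<in>K. w k $ l * cnj (w k $ i)))"
    using A by (simp add: tr_def scalar_prod_def lessThan_atLeast0 sum_outer_prod_def)
  also have "\<dots> = (\<Sum>i<n. \<Sum>k\<in>K. (\<Sum>l<n. A $$ (i,l) * w k $ l) * cnj (w k $ i))"
    by (simp add: sum_distrib_left sum_distrib_right mult_ac sum.swap[of _ K])
  also have "\<dots> = (\<Sum>k\<in>K. \<Sum>i<n. (\<Sum>l<n. A $$ (i,l) * w k $ l) * cnj (w k $ i))"
    by (rule sum.swap)
  also have "\<dots> = (\<Sum>k\<in>K. cinner (A *\<^sub>v w k) (w k))"
    using A w by (intro sum.cong refl) (auto simp: cinner_def scalar_prod_def lessThan_atLeast0)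
  finally show ?thesis .
qed

lemma tr_sum_outer_prod:
  "\<forall>k\<in>K. w k \<in> carrier_vec n \<Longrightarrow> tr (sum_outer_prod n K w) = (\<Sum>k\<in>K. cinner (w k) (w k))"
  using tr_mult_sum_outer_prod[OF one_carrier_mat, of K w n]
  by (simp add: left_mult_one_mat[OF sum_outer_prod_carrier])

text \<open>The complementary projection has zero expectation in this state, hence annihilates every term.\<close>

lemma sum_outer_prod_in_range:
  assumes P: "orth_proj n P" and w: "\<forall>k<m. w k \<in> carrier_vec n"
    and trP: "tr (P * sum_outer_prod n {..<m} w) = tr (sum_outer_prod n {..<m} w)" and k: "k < m"
  shows "P *\<^sub>v w k = w k"
proof -
  define Q where "Q = 1\<^sub>m n - P"
  have Q: "orth_proj n Q" unfolding Q_def by (rule orth_proj_complement[OF P])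
  then have Qc: "Q \<in> carrier_mat n n" and aQ: "adj Q = Q" by (auto simp: orth_proj_def)
  have Pc: "P \<in> carrier_mat n n" using P by (simp add: orth_proj_def)
  have "cinner (Q *\<^sub>v w j) (w j) = cinner (Q *\<^sub>v w j) (Q *\<^sub>v w j)" if "j < m" for j
    using cinner_adj[OF Qc _ w[rule_format, OF that], of "Q *\<^sub>v w j"] aQ
      orth_proj_mult_vec_idem[OF Q w[rule_format, OF that]] Qc w that by simp
  moreover have "tr (Q * sum_outer_prod n {..<m} w) = 0"
    using trP Pc tr_minus[of "sum_outer_prod n {..<m} w" n "P * sum_outer_prod n {..<m} w"]
    by (simp add: Q_def minus_mult_distrib_mat[OF one_carrier_mat Pc sum_outer_prod_carrier]
        left_mult_one_mat[OF sum_outer_prod_carrier])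
  ultimately have "(\<Sum>k<m. cinner (Q *\<^sub>v w k) (Q *\<^sub>v w k)) = 0"
    using tr_mult_sum_outer_prod[OF Qc, of "{..<m}" w] w by simp
  then have "(\<Sum>k<m. Re (cinner (Q *\<^sub>v w k) (Q *\<^sub>v w k))) = 0"
    by (metis Re_sum zero_complex.sel(1))
  then have "Re (cinner (Q *\<^sub>v w k) (Q *\<^sub>v w k)) = 0"
    using k by (subst (asm) sum_nonneg_eq_0_iff) (auto simp: cinner_self sum_nonneg)
  then have "Q *\<^sub>v w k = 0\<^sub>v n"
    using cinner_self_eq_0[of "Q *\<^sub>v w k" n] cinner_self_real Qc w k by (simp add: complex_eq_iff)
  then have "w k - P *\<^sub>v w k = 0\<^sub>v n" using one_minus_mult_vec[OF Pc, of "w k"] w k by (simp add: Q_def)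
  show ?thesis
  proof (rule eq_vecI)
    fix i assume "i < dim_vec (w k)"
    moreover have "w k \<in> carrier_vec n" using w k by simp
    ultimately have i: "i < n" by simp
    then have "(w k - P *\<^sub>v w k) $ i = 0" using \<open>w k - P *\<^sub>v w k = 0\<^sub>v n\<close> by simp
    then show "(P *\<^sub>v w k) $ i = w k $ i" using i Pc by simp
  qed (use w k Pc in auto)
qed

section \<open>Partial traces\<close>

lemma pair_index_less:
  assumes "(i::nat) < m" "k < d"
  shows "i * d + k < m * d"
proof -
  have "i * d + k < Suc i * d" using assms by simp
  also have "\<dots> \<le> m * d" using assms by (intro mult_le_mono1) simp
  finally show ?thesis .
qed

lemma pair_index_eq_iff: "(k::nat) < d \<Longrightarrow> u = i * d + k \<longleftrightarrow> u div d = i \<and> u mod d = k"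
  by auto

lemma sum_pair_index: "(\<Sum>i<(a::nat) * b. h i) = (\<Sum>x<a. \<Sum>y<b. h (x * b + y))"
proof -
  have "sum h {x * b..<x * b + b} = (\<Sum>y<b. h (x * b + y))" for x
    using sum.shift_bounds_nat_ivl[of h 0 "x * b" b] by (simp add: lessThan_atLeast0 add.commute)
  then show ?thesis by (simp flip: sum.nat_group)
qed

lemma index_ptrace2:
  "M \<in> carrier_mat (m*d) (m*d) \<Longrightarrow> 0 < d \<Longrightarrow> i < m \<Longrightarrow> j < m \<Longrightarrow>
    ptrace2 d M $$ (i,j) = (\<Sum>k<d. M $$ (i*d+k, j*d+k))"
  by (simp add: ptrace2_def)

lemma ptrace2_carrier [simp]:
  "M \<in> carrier_mat (m*d) (m*d) \<Longrightarrow> 0 < d \<Longrightarrow> ptrace2 d M \<in> carrier_mat m m"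
  by (simp add: ptrace2_def)

lemma tr_ptrace2:
  assumes M: "M \<in> carrier_mat (m*d) (m*d)" and d: "0 < d"
  shows "tr (ptrace2 d M) = tr M"
proof -
  have "tr (ptrace2 d M) = (\<Sum>i<m. \<Sum>k<d. M $$ (i*d+k, i*d+k))"
    unfolding tr_def using M d by (simp add: index_ptrace2 ptrace2_def)
  also have "\<dots> = tr M" using M by (simp add: tr_def sum_pair_index)
  finally show ?thesis .
qed

lemma ptrace2_ptrace2:
  assumes M: "M \<in> carrier_mat (m*b*x) (m*b*x)" and b: "0 < b" and x: "0 < x"
  shows "ptrace2 b (ptrace2 x M) = ptrace2 (b*x) M"
proof (rule eq_matI)
  have M1: "M \<in> carrier_mat ((m*b)*x) ((m*b)*x)" and M2: "M \<in> carrier_mat (m*(b*x)) (m*(b*x))"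
    using M by (simp_all add: mult.assoc)
  have P1: "ptrace2 x M \<in> carrier_mat (m*b) (m*b)" using ptrace2_carrier[OF M1 x] .
  show "dim_row (ptrace2 b (ptrace2 x M)) = dim_row (ptrace2 (b*x) M)"
    "dim_col (ptrace2 b (ptrace2 x M)) = dim_col (ptrace2 (b*x) M)"
    using ptrace2_carrier[OF P1 b] ptrace2_carrier[OF M2] b x by auto
  fix i j assume "i < dim_row (ptrace2 (b*x) M)" "j < dim_col (ptrace2 (b*x) M)"
  then have i: "i < m" and j: "j < m" using ptrace2_carrier[OF M2] b x by auto
  have "ptrace2 b (ptrace2 x M) $$ (i,j) = (\<Sum>c<b. \<Sum>y<x. M $$ ((i*b+c)*x+y, (j*b+c)*x+y))"
    using index_ptrace2[OF P1 b i j] index_ptrace2[OF M1 x] pair_index_less i j by simp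
  also have "\<dots> = (\<Sum>c<b. \<Sum>y<x. M $$ (i*(b*x)+(c*x+y), j*(b*x)+(c*x+y)))"
    by (simp add: algebra_simps)
  also have "\<dots> = ptrace2 (b*x) M $$ (i,j)"
    using index_ptrace2[OF M2 _ i j] b x by (simp add: sum_pair_index)
  finally show "ptrace2 b (ptrace2 x M) $$ (i,j) = ptrace2 (b*x) M $$ (i,j)" .
qed

text \<open>The isometries \<open>I\<^sub>m \<otimes> |k\<rangle>\<close> and \<open>|x\<rangle> \<otimes> I\<^sub>R\<close>.\<close>

definition id_kron_ket :: "nat \<Rightarrow> nat \<Rightarrow> nat \<Rightarrow> complex mat" where
  "id_kron_ket m d k = mat (m*d) m (\<lambda>(u,i). if u = i*d + k then 1 else 0)"

definition ket_kron_id :: "nat \<Rightarrow> nat \<Rightarrow> nat \<Rightarrow> complex mat" where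
  "ket_kron_id a R x = mat (a*R) R (\<lambda>(u,s). if u = x*R + s then 1 else 0)"

lemma id_kron_ket_carrier [simp]: "id_kron_ket m d k \<in> carrier_mat (m*d) m"
  by (simp add: id_kron_ket_def)

lemma ket_kron_id_carrier [simp]: "ket_kron_id a R x \<in> carrier_mat (a*R) R"
  by (simp add: ket_kron_id_def)

lemma adj_id_kron_ket_mult:
  assumes M: "M \<in> carrier_mat (m*d) c" and k: "k < d"
  shows "adj (id_kron_ket m d k) * M = mat m c (\<lambda>(i,j). M $$ (i*d+k, j))"
proof (rule eq_matI)
  fix i j assume "i < dim_row (mat m c (\<lambda>(i,j). M $$ (i*d+k, j)))"
    "j < dim_col (mat m c (\<lambda>(i,j). M $$ (i*d+k, j)))"
  then have i: "i < m" and j: "j < c" by auto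
  have "(adj (id_kron_ket m d k) * M) $$ (i,j) = (\<Sum>u\<in>{0..<m*d}. if u = i*d+k then M $$ (u,j) else 0)"
    using M i j by (auto simp: scalar_prod_def id_kron_ket_def intro!: sum.cong)
  then show "(adj (id_kron_ket m d k) * M) $$ (i,j) = mat m c (\<lambda>(i,j). M $$ (i*d+k, j)) $$ (i,j)"
    using i j pair_index_less[OF i k] by simp
qed (use M in \<open>auto simp: id_kron_ket_def\<close>)

lemma mult_id_kron_ket:
  assumes A: "A \<in> carrier_mat r (m*d)" and k: "k < d"
  shows "A * id_kron_ket m d k = mat r m (\<lambda>(i,j). A $$ (i, j*d+k))"
proof (rule eq_matI)
  fix i j assume "i < dim_row (mat r m (\<lambda>(i,j). A $$ (i, j*d+k)))"
    "j < dim_col (mat r m (\<lambda>(i,j). A $$ (i, j*d+k)))"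
  then have i: "i < r" and j: "j < m" by auto
  have "(A * id_kron_ket m d k) $$ (i,j) = (\<Sum>u\<in>{0..<m*d}. if u = j*d+k then A $$ (i,u) else 0)"
    using A i j by (auto simp: scalar_prod_def id_kron_ket_def intro!: sum.cong)
  then show "(A * id_kron_ket m d k) $$ (i,j) = mat r m (\<lambda>(i,j). A $$ (i, j*d+k)) $$ (i,j)"
    using i j pair_index_less[OF j k] by simp
qed (use A in \<open>auto simp: id_kron_ket_def\<close>)

lemma adj_ket_kron_id_mult:
  assumes M: "M \<in> carrier_mat (a*R) c" and x: "x < a"
  shows "adj (ket_kron_id a R x) * M = mat R c (\<lambda>(s,j). M $$ (x*R+s, j))"
proof (rule eq_matI)
  fix i j assume "i < dim_row (mat R c (\<lambda>(s,j). M $$ (x*R+s, j)))"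
    "j < dim_col (mat R c (\<lambda>(s,j). M $$ (x*R+s, j)))"
  then have i: "i < R" and j: "j < c" by auto
  have "(adj (ket_kron_id a R x) * M) $$ (i,j) = (\<Sum>u\<in>{0..<a*R}. if u = x*R+i then M $$ (u,j) else 0)"
    using M i j by (auto simp: scalar_prod_def ket_kron_id_def intro!: sum.cong)
  then show "(adj (ket_kron_id a R x) * M) $$ (i,j) = mat R c (\<lambda>(s,j). M $$ (x*R+s, j)) $$ (i,j)"
    using i j pair_index_less[OF x i] by simp
qed (use M in \<open>auto simp: ket_kron_id_def\<close>)

lemma mult_ket_kron_id:
  assumes A: "A \<in> carrier_mat r (a*R)" and x: "x < a"
  shows "A * ket_kron_id a R x = mat r R (\<lambda>(i,t). A $$ (i, x*R+t))"
proof (rule eq_matI)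
  fix i j assume "i < dim_row (mat r R (\<lambda>(i,t). A $$ (i, x*R+t)))"
    "j < dim_col (mat r R (\<lambda>(i,t). A $$ (i, x*R+t)))"
  then have i: "i < r" and j: "j < R" by auto
  have "(A * ket_kron_id a R x) $$ (i,j) = (\<Sum>u\<in>{0..<a*R}. if u = x*R+j then A $$ (i,u) else 0)"
    using A i j by (auto simp: scalar_prod_def ket_kron_id_def intro!: sum.cong)
  then show "(A * ket_kron_id a R x) $$ (i,j) = mat r R (\<lambda>(i,t). A $$ (i, x*R+t)) $$ (i,j)"
    using i j pair_index_less[OF x j] by simp
qed (use A in \<open>auto simp: ket_kron_id_def\<close>)

lemma compress_id_kron_ket:
  assumes M: "M \<in> carrier_mat (m*d) (m*d)" and k: "k < d"
  shows "adj (id_kron_ket m d k) * M * id_kron_ket m d k = mat m m (\<lambda>(i,j). M $$ (i*d+k, j*d+k))"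
proof -
  have "adj (id_kron_ket m d k) * M * id_kron_ket m d k
      = mat m (m*d) (\<lambda>(i,j). M $$ (i*d+k, j)) * id_kron_ket m d k"
    by (simp add: adj_id_kron_ket_mult[OF M k])
  also have "\<dots> = mat m m (\<lambda>(i,j). M $$ (i*d+k, j*d+k))"
    by (subst mult_id_kron_ket[of _ m]) (use k pair_index_less in auto)
  finally show ?thesis .
qed

lemma compress_ket_kron_id:
  assumes M: "M \<in> carrier_mat (a*R) (a*R)" and x: "x < a" and x': "x' < a"
  shows "adj (ket_kron_id a R x) * M * ket_kron_id a R x' = mat R R (\<lambda>(s,t). M $$ (x*R+s, x'*R+t))"
proof -
  have "adj (ket_kron_id a R x) * M * ket_kron_id a R x'
      = mat R (a*R) (\<lambda>(s,j). M $$ (x*R+s, j)) * ket_kron_id a R x'"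
    by (simp add: adj_ket_kron_id_mult[OF M x])
  also have "\<dots> = mat R R (\<lambda>(s,t). M $$ (x*R+s, x'*R+t))"
    by (subst mult_ket_kron_id[of _ R a]) (use x' pair_index_less in auto)
  finally show ?thesis .
qed

lemma ptrace2_eq_msum:
  assumes M: "M \<in> carrier_mat (m*d) (m*d)" and d: "0 < d"
  shows "ptrace2 d M = msum m (map (\<lambda>k. adj (id_kron_ket m d k) * M * id_kron_ket m d k) [0..<d])"
proof (rule eq_matI)
  fix i j assume "i < dim_row (msum m (map (\<lambda>k. adj (id_kron_ket m d k) * M * id_kron_ket m d k) [0..<d]))"
    "j < dim_col (msum m (map (\<lambda>k. adj (id_kron_ket m d k) * M * id_kron_ket m d k) [0..<d]))"
  then have i: "i < m" and j: "j < m" by auto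
  have "msum m (map (\<lambda>k. adj (id_kron_ket m d k) * M * id_kron_ket m d k) [0..<d]) $$ (i,j)
     = (\<Sum>k\<leftarrow>[0..<d]. M $$ (i*d+k, j*d+k))"
    using i j by (simp add: comp_def)
      (intro arg_cong[where f = sum_list] map_cong refl, use i j M compress_id_kron_ket in auto)
  also have "\<dots> = ptrace2 d M $$ (i,j)"
    using index_ptrace2[OF M d i j] by (simp add: interv_sum_list_conv_sum_set_nat lessThan_atLeast0)
  finally show "ptrace2 d M $$ (i,j) = msum m (map (\<lambda>k. adj (id_kron_ket m d k) * M * id_kron_ket m d k) [0..<d]) $$ (i,j)"
    by simp
qed (use M d in \<open>auto simp: ptrace2_def\<close>)

lemma ptrace2_entry_eq_tr:
  assumes M: "M \<in> carrier_mat (a*R) (a*R)" and R: "0 < R" and x: "x < a" and x': "x' < a"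
  shows "ptrace2 R M $$ (x,x') = tr (adj (ket_kron_id a R x) * M * ket_kron_id a R x')"
  unfolding compress_ket_kron_id[OF M x x'] using index_ptrace2[OF M R x x'] by (simp add: tr_def)

lemma hermitian_psd_ptrace2:
  assumes M: "hermitian_psd (m*d) M" and d: "0 < d"
  shows "hermitian_psd m (ptrace2 d M)"
proof -
  have Mc: "M \<in> carrier_mat (m*d) (m*d)" using M by (simp add: hermitian_psd_def)
  show ?thesis unfolding ptrace2_eq_msum[OF Mc d]
    using hermitian_psd_conj[OF M, of "adj (id_kron_ket m d _)" m]
    by (intro hermitian_psd_msum) auto
qed

lemma density_ptrace2: "density (m*d) M \<Longrightarrow> 0 < d \<Longrightarrow> density m (ptrace2 d M)"
  unfolding density_iff_hermitian_psd
  using hermitian_psd_ptrace2 tr_ptrace2 by (auto simp: hermitian_psd_def)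

lemma kron_one_left_carrier [simp]:
  "K \<in> carrier_mat R R \<Longrightarrow> kron (1\<^sub>m a) K \<in> carrier_mat (a*R) (a*R)"
  by (auto simp: kron_def)

lemma kron_one_right_carrier [simp]:
  "E \<in> carrier_mat p l \<Longrightarrow> kron E (1\<^sub>m d) \<in> carrier_mat (p*d) (l*d)"
  by (auto simp: kron_def)

lemma index_kron_one_left:
  assumes K: "K \<in> carrier_mat R R" and u: "u < a*R" and v: "v < a*R"
  shows "kron (1\<^sub>m a) K $$ (u,v) = (if u div R = v div R then K $$ (u mod R, v mod R) else 0)"
proof -
  have "u div R < a" "v div R < a" using u v by (auto simp: less_mult_imp_div_less)
  then show ?thesis using K u v unfolding kron_def by auto
qed

lemma adj_ket_kron_id_mult_kron_one_left:
  assumes K: "K \<in> carrier_mat R R" and x: "x < a"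
  shows "adj (ket_kron_id a R x) * kron (1\<^sub>m a) K = K * adj (ket_kron_id a R x)"
proof (rule eq_matI)
  fix s v assume "s < dim_row (K * adj (ket_kron_id a R x))" "v < dim_col (K * adj (ket_kron_id a R x))"
  then have s: "s < R" and v: "v < a*R" using K by (auto simp: ket_kron_id_def)
  have "(adj (ket_kron_id a R x) * kron (1\<^sub>m a) K) $$ (s,v) = kron (1\<^sub>m a) K $$ (x*R+s, v)"
    by (subst adj_ket_kron_id_mult[OF kron_one_left_carrier[OF K] x]) (use s v in auto)
  also have "\<dots> = (if v div R = x then K $$ (s, v mod R) else 0)"
    using index_kron_one_left[OF K pair_index_less[OF x s] v] s by auto
  also have "\<dots> = (\<Sum>t<R. if v = x*R+t then K $$ (s,t) else 0)"
    using s by (simp add: pair_index_eq_iff sum.delta' cong: if_cong)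
  also have "\<dots> = (K * adj (ket_kron_id a R x)) $$ (s,v)"
    using K s v by (auto simp: ket_kron_id_def scalar_prod_def lessThan_atLeast0 intro!: sum.cong)
  finally show "(adj (ket_kron_id a R x) * kron (1\<^sub>m a) K) $$ (s,v) = (K * adj (ket_kron_id a R x)) $$ (s,v)" .
qed (use K in \<open>auto simp: ket_kron_id_def kron_def\<close>)

lemma adj_id_kron_ket_mult_kron_one_right:
  assumes E: "E \<in> carrier_mat p l" and k: "k < d"
  shows "adj (id_kron_ket p d k) * kron E (1\<^sub>m d) = E * adj (id_kron_ket l d k)"
proof (rule eq_matI)
  fix i v assume "i < dim_row (E * adj (id_kron_ket l d k))" "v < dim_col (E * adj (id_kron_ket l d k))"
  then have i: "i < p" and v: "v < l*d" using E by (auto simp: id_kron_ket_def)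
  have vd: "v div d < l" using v by (simp add: less_mult_imp_div_less)
  have "(adj (id_kron_ket p d k) * kron E (1\<^sub>m d)) $$ (i,v) = kron E (1\<^sub>m d) $$ (i*d+k, v)"
    by (subst adj_id_kron_ket_mult[OF kron_one_right_carrier[OF E] k]) (use i v in auto)
  also have "\<dots> = (if v mod d = k then E $$ (i, v div d) else 0)"
    using E i v k vd pair_index_less[OF i k] unfolding kron_def by auto
  also have "\<dots> = (\<Sum>j<l. if v = j*d+k then E $$ (i,j) else 0)"
    using k vd by (simp add: pair_index_eq_iff sum.delta' conj_commute cong: if_cong)
  also have "\<dots> = (E * adj (id_kron_ket l d k)) $$ (i,v)"
    using E i v by (auto simp: id_kron_ket_def scalar_prod_def lessThan_atLeast0 intro!: sum.cong)
  finally show "(adj (id_kron_ket p d k) * kron E (1\<^sub>m d)) $$ (i,v) = (E * adj (id_kron_ket l d k)) $$ (i,v)" .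
qed (use E in \<open>auto simp: id_kron_ket_def kron_def\<close>)

lemma compress_conj_intertwine:
  assumes F: "F \<in> carrier_mat P Q" and S: "S \<in> carrier_mat Q Q" and G: "G \<in> carrier_mat a b"
    and X: "X \<in> carrier_mat P a" and Y: "Y \<in> carrier_mat P a"
    and X': "X' \<in> carrier_mat Q b" and Y': "Y' \<in> carrier_mat Q b"
    and XF: "adj X * F = G * adj X'" and YF: "adj Y * F = G * adj Y'"
  shows "adj X * (F * S * adj F) * Y = G * (adj X' * S * Y') * adj G"
proof -
  have aX: "adj X \<in> carrier_mat a P" and aF: "adj F \<in> carrier_mat Q P"
    and aX': "adj X' \<in> carrier_mat b Q" and aG: "adj G \<in> carrier_mat b a"
    using X F X' G by auto
  have FY: "adj F * Y = Y' * adj G"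
    using arg_cong[OF YF, of adj] adj_mult[OF adj_carrier[OF Y] F] adj_mult[OF G adj_carrier[OF Y']]
    by simp
  have XFS: "adj X * F * S \<in> carrier_mat a Q" using aX F S by simp
  have "adj X * (F * S * adj F) * Y = adj X * (F * S) * adj F * Y"
    using assoc_mult_mat[OF aX _ aF, of "F * S"] F S by simp
  also have "\<dots> = (adj X * F * S) * (adj F * Y)"
    using assoc_mult_mat[OF aX F S] assoc_mult_mat[OF XFS aF Y] by simp
  also have "\<dots> = G * (adj X' * S) * (Y' * adj G)"
    unfolding XF FY using assoc_mult_mat[OF G aX' S] by simp
  also have "\<dots> = G * (adj X' * S * Y') * adj G"
  proof -
    have XS: "adj X' * S \<in> carrier_mat b Q" using aX' S by simp
    have "G * (adj X' * S) * (Y' * adj G) = G * (adj X' * S) * Y' * adj G"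
      using assoc_mult_mat[OF _ Y' aG, of "G * (adj X' * S)" a] G XS by simp
    also have "G * (adj X' * S) * Y' = G * (adj X' * S * Y')"
      using assoc_mult_mat[OF G XS Y'] .
    finally show ?thesis .
  qed
  finally show ?thesis .
qed

lemma tr_apply_kraus:
  assumes Ks: "kraus R Ks" and B: "B \<in> carrier_mat R R"
  shows "tr (apply_kraus R Ks B) = tr B"
proof -
  have Kc: "\<forall>K\<in>set Ks. K \<in> carrier_mat R R" using Ks by (simp add: kraus_def)
  have "tr (apply_kraus R Ks B) = (\<Sum>K\<leftarrow>Ks. tr (K * B * adj K))"
    unfolding apply_kraus_def using Kc B by (subst tr_msum[of _ R]) (auto simp: comp_def)
  also have "\<dots> = (\<Sum>K\<leftarrow>Ks. tr (B * (adj K * K)))"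
  proof (intro arg_cong[where f = sum_list] map_cong refl)
    fix K assume "K \<in> set Ks"
    then have K: "K \<in> carrier_mat R R" using Kc by simp
    have "tr (K * B * adj K) = tr (K * (B * adj K))" using assoc_mult_mat[OF K B adj_carrier[OF K]] by simp
    also have "\<dots> = tr (B * adj K * K)" using tr_mult_commute[OF K] B K by simp
    finally show "tr (K * B * adj K) = tr (B * (adj K * K))" using assoc_mult_mat[OF B _ K] K by simp
  qed
  also have "\<dots> = tr (B * msum R (map (\<lambda>K. adj K * K) Ks))"
    using Kc
  proof (induction Ks)
    case Nil
    then show ?case using B by (simp add: msum_Nil tr_def)
  next
    case (Cons K Ks)
    then have K: "K \<in> carrier_mat R R" by simp
    then have KK: "adj K * K \<in> carrier_mat R R" using mult_carrier_mat[OF adj_carrier] by blast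
    then have "B * msum R (map (\<lambda>K. adj K * K) (K # Ks)) = B * (adj K * K) + B * msum R (map (\<lambda>K. adj K * K) Ks)"
      using mult_add_distrib_mat[OF B] by (simp add: msum_Cons)
    moreover have "B * (adj K * K) \<in> carrier_mat R R" "B * msum R (map (\<lambda>K. adj K * K) Ks) \<in> carrier_mat R R"
      using B KK by auto
    ultimately show ?case using Cons tr_add by simp
  qed
  also have "\<dots> = tr B" using Ks B by (simp add: kraus_def)
  finally show ?thesis .
qed

text \<open>The marginal is unchanged because the operation is trace preserving.\<close>

lemma ptrace2_apply_kraus_kron_one_left:
  assumes Ks: "kraus R Ks" and M: "M \<in> carrier_mat (a*R) (a*R)" and R: "0 < R"
  shows "ptrace2 R (apply_kraus (a*R) (map (\<lambda>K. kron (1\<^sub>m a) K) Ks) M) = ptrace2 R M"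
proof -
  have Kc: "\<forall>K\<in>set Ks. K \<in> carrier_mat R R" using Ks by (simp add: kraus_def)
  define AK where "AK = apply_kraus (a*R) (map (\<lambda>K. kron (1\<^sub>m a) K) Ks) M"
  have AK: "AK \<in> carrier_mat (a*R) (a*R)" by (simp add: AK_def apply_kraus_def)
  show ?thesis unfolding AK_def[symmetric]
  proof (rule eq_matI)
    fix x x' assume "x < dim_row (ptrace2 R M)" "x' < dim_col (ptrace2 R M)"
    then have x: "x < a" and x': "x' < a" using ptrace2_carrier[OF M R] by auto
    define X where "X = ket_kron_id a R x"
    define Y where "Y = ket_kron_id a R x'"
    define B where "B = adj X * M * Y"
    have B: "B \<in> carrier_mat R R" unfolding B_def X_def Y_def compress_ket_kron_id[OF M x x'] by simp
    have "adj X * AK * Y = msum R (map (\<lambda>K. adj X * (kron (1\<^sub>m a) K * M * adj (kron (1\<^sub>m a) K)) * Y) Ks)"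
      unfolding AK_def apply_kraus_def using Kc conj_carrier[OF kron_one_left_carrier M]
      by (subst mult_msum_mult[of _ "a*R"]) (auto simp: X_def Y_def msum_def comp_def)
    also have "\<dots> = apply_kraus R Ks B"
    proof -
      have "adj X * (kron (1\<^sub>m a) K * M * adj (kron (1\<^sub>m a) K)) * Y = K * B * adj K"
        if K: "K \<in> carrier_mat R R" for K
        unfolding B_def X_def Y_def
        by (rule compress_conj_intertwine[OF kron_one_left_carrier[OF K] M K])
          (auto simp: adj_ket_kron_id_mult_kron_one_left[OF K] x x')
      then show ?thesis
        unfolding apply_kraus_def using Kc by (intro arg_cong[where f = "msum R"] map_cong) auto
    qed
    finally have "ptrace2 R AK $$ (x,x') = tr (apply_kraus R Ks B)"
      using ptrace2_entry_eq_tr[OF AK R x x'] by (simp add: X_def Y_def)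
    then show "ptrace2 R AK $$ (x,x') = ptrace2 R M $$ (x,x')"
      using tr_apply_kraus[OF Ks B] ptrace2_entry_eq_tr[OF M R x x'] by (simp add: B_def X_def Y_def)
  qed (use ptrace2_carrier[OF AK R] ptrace2_carrier[OF M R] in auto)
qed

lemma ptrace2_conj_kron_one_right:
  assumes E: "E \<in> carrier_mat p l" and S: "S \<in> carrier_mat (l*d) (l*d)" and d: "0 < d"
  shows "ptrace2 d (kron E (1\<^sub>m d) * S * adj (kron E (1\<^sub>m d))) = E * ptrace2 d S * adj E"
proof -
  define F where "F = kron E (1\<^sub>m d)"
  have F: "F \<in> carrier_mat (p*d) (l*d)" using E by (simp add: F_def)
  have "ptrace2 d (F * S * adj F)
      = msum p (map (\<lambda>k. adj (id_kron_ket p d k) * (F * S * adj F) * id_kron_ket p d k) [0..<d])"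
    using ptrace2_eq_msum[of "F * S * adj F" p d] F S d by simp
  also have "\<dots> = msum p (map (\<lambda>k. E * (adj (id_kron_ket l d k) * S * id_kron_ket l d k) * adj E) [0..<d])"
    unfolding F_def using compress_conj_intertwine[OF kron_one_right_carrier[OF E] S E]
      adj_id_kron_ket_mult_kron_one_right[OF E]
    by (intro arg_cong[where f = "msum p"] map_cong) auto
  also have "\<dots> = E * msum l (map (\<lambda>k. adj (id_kron_ket l d k) * S * id_kron_ket l d k) [0..<d]) * adj E"
    using S E by (subst mult_msum_mult[of _ l]) (auto simp: compress_id_kron_ket msum_def comp_def)
  also have "\<dots> = E * ptrace2 d S * adj E"
    using ptrace2_eq_msum[OF S d] by simp
  finally show ?thesis by (simp add: F_def)
qed

section \<open>Partial isometries between families with equal Gram matrices\<close>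

text \<open>The last clause says that the range of \<open>K\<close> lies in the span of the \<open>\<psi> a\<close>.\<close>

definition partial_isometry_mapping ::
  "nat \<Rightarrow> complex mat \<Rightarrow> (nat \<Rightarrow> complex vec) \<Rightarrow> (nat \<Rightarrow> complex vec) \<Rightarrow> nat \<Rightarrow> bool" where
  "partial_isometry_mapping N K \<phi> \<psi> m \<longleftrightarrow> K \<in> carrier_mat N N \<and> orth_proj N (adj K * K) \<and>
     (\<forall>a<m. K *\<^sub>v \<phi> a = \<psi> a \<and> adj K * K *\<^sub>v \<phi> a = \<phi> a) \<and>
     (\<forall>y\<in>carrier_vec N. (\<forall>a<m. cinner y (\<psi> a) = 0) \<longrightarrow> adj K *\<^sub>v y = 0\<^sub>v N)"

lemma partial_isometry_mapping_0: "partial_isometry_mapping N (0\<^sub>m N N) \<phi> \<psi> 0"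
proof -
  have "adj (0\<^sub>m N N) = 0\<^sub>m N N" by (intro eq_matI) auto
  then show ?thesis by (auto simp: partial_isometry_mapping_def orth_proj_def intro!: eq_vecI)
qed

lemma orth_proj_add_rank_one:
  assumes P: "orth_proj N P" and r: "r \<in> carrier_vec N" and Pr: "P *\<^sub>v r = 0\<^sub>v N"
    and P': "P' \<in> carrier_mat N N" "adj P' = P'"
    and P'x: "\<And>x. x \<in> carrier_vec N \<Longrightarrow> P' *\<^sub>v x = P *\<^sub>v x + (cinner x r / cinner r r) \<cdot>\<^sub>v r"
  shows "orth_proj N P'"
proof -
  have Pc: "P \<in> carrier_mat N N" and aP: "adj P = P" using P by (auto simp: orth_proj_def)
  have "P' * P' = P'"
  proof (rule eq_mat_by_mult_vecI[of _ N N])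
    fix x :: "complex vec" assume x: "x \<in> carrier_vec N"
    define \<alpha> where "\<alpha> = cinner x r / cinner r r"
    have Px: "P *\<^sub>v x \<in> carrier_vec N" and ar: "\<alpha> \<cdot>\<^sub>v r \<in> carrier_vec N" using Pc x r by auto
    have Pr_x: "cinner (P *\<^sub>v x) r = 0"
      using cinner_adj[OF Pc x r] aP Pr x by simp
    have "P *\<^sub>v (P *\<^sub>v x + \<alpha> \<cdot>\<^sub>v r) = P *\<^sub>v x"
      using mult_add_distrib_mat_vec[OF Pc Px ar] mult_mat_vec[OF Pc r] Pr
        orth_proj_mult_vec_idem[OF P x] Px by simp
    moreover have "cinner (P *\<^sub>v x + \<alpha> \<cdot>\<^sub>v r) r / cinner r r = \<alpha>"
    proof (cases "cinner r r = 0")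
      case False
      then show ?thesis using cinner_add_left[OF Px ar] Pr_x by (simp add: cinner_smult_left)
    qed (simp add: \<alpha>_def)
    moreover have "P' *\<^sub>v x = P *\<^sub>v x + \<alpha> \<cdot>\<^sub>v r" using P'x[OF x] by (simp add: \<alpha>_def)
    ultimately have "P' *\<^sub>v (P' *\<^sub>v x) = P' *\<^sub>v x"
      using P'x[OF add_carrier_vec[OF Px ar]] by simp
    then show "P' * P' *\<^sub>v x = P' *\<^sub>v x" using assoc_mult_mat_vec[OF P'(1) P'(1) x] by simp
  qed (use P' in auto)
  then show ?thesis using P' by (simp add: orth_proj_def)
qed

lemma partial_isometry_add_rank_one:
  assumes K: "K \<in> carrier_mat N N" and P: "orth_proj N (adj K * K)"
    and r: "r \<in> carrier_vec N" and s: "s \<in> carrier_vec N"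
    and Pr: "adj K * K *\<^sub>v r = 0\<^sub>v N" and Ks: "adj K *\<^sub>v s = 0\<^sub>v N"
    and norms: "cinner s s = cinner r r"
  defines "K' \<equiv> K + (1 / cinner r r) \<cdot>\<^sub>m outer_prod s r"
  shows "K' \<in> carrier_mat N N"
    and "\<And>x. x \<in> carrier_vec N \<Longrightarrow> K' *\<^sub>v x = K *\<^sub>v x + (cinner x r / cinner r r) \<cdot>\<^sub>v s"
    and "\<And>y. y \<in> carrier_vec N \<Longrightarrow> adj K' *\<^sub>v y = adj K *\<^sub>v y + (cinner y s / cinner r r) \<cdot>\<^sub>v r"
    and "\<And>x. x \<in> carrier_vec N \<Longrightarrow> adj K' * K' *\<^sub>v x = adj K * K *\<^sub>v x + (cinner x r / cinner r r) \<cdot>\<^sub>v r"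
    and "orth_proj N (adj K' * K')"
proof -
  define c where "c = cinner r r"
  have "cnj c = c" using cinner_self_real[of r] by (simp add: c_def complex_eq_iff)
  then have cnj_c: "cnj (1 / c) = 1 / c" by simp
  have O: "outer_prod s r \<in> carrier_mat N N" and O': "outer_prod r s \<in> carrier_mat N N"
    using outer_prod_carrier r s by auto
  have aK: "adj K \<in> carrier_mat N N" using K by simp
  show K': "K' \<in> carrier_mat N N" using K O by (simp add: K'_def)
  show K'x: "K' *\<^sub>v x = K *\<^sub>v x + (cinner x r / cinner r r) \<cdot>\<^sub>v s" if x: "x \<in> carrier_vec N" for x
    unfolding K'_def using x K O r
    by (simp add: add_mult_distrib_mat_vec[OF K _ x] smult_mat_mult_vec outer_prod_mult_vec
        smult_smult_assoc)
  have aK': "adj K' = adj K + (1 / c) \<cdot>\<^sub>m outer_prod r s"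
    unfolding K'_def using adj_add[OF K, of "(1 / cinner r r) \<cdot>\<^sub>m outer_prod s r"] O cnj_c
    by (simp add: adj_smult c_def)
  show aK'y: "adj K' *\<^sub>v y = adj K *\<^sub>v y + (cinner y s / cinner r r) \<cdot>\<^sub>v r" if y: "y \<in> carrier_vec N" for y
    unfolding aK' c_def using y aK O' s
    by (simp add: add_mult_distrib_mat_vec[OF aK _ y] smult_mat_mult_vec outer_prod_mult_vec
        smult_smult_assoc)
  show P'x: "adj K' * K' *\<^sub>v x = adj K * K *\<^sub>v x + (cinner x r / cinner r r) \<cdot>\<^sub>v r"
    if x: "x \<in> carrier_vec N" for x
  proof -
    define \<alpha> where "\<alpha> = cinner x r / c"
    have Kx: "K *\<^sub>v x \<in> carrier_vec N" and as: "\<alpha> \<cdot>\<^sub>v s \<in> carrier_vec N" using K x s by auto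
    have "adj K' * K' *\<^sub>v x = adj K' *\<^sub>v (K *\<^sub>v x + \<alpha> \<cdot>\<^sub>v s)"
      using assoc_mult_mat_vec[OF adj_carrier[OF K'] K' x] K'x[OF x] by (simp add: \<alpha>_def c_def)
    also have "\<dots> = adj K *\<^sub>v (K *\<^sub>v x + \<alpha> \<cdot>\<^sub>v s) + (cinner (K *\<^sub>v x + \<alpha> \<cdot>\<^sub>v s) s / c) \<cdot>\<^sub>v r"
      using aK'y Kx as by (simp add: c_def)
    also have "adj K *\<^sub>v (K *\<^sub>v x + \<alpha> \<cdot>\<^sub>v s) = adj K * K *\<^sub>v x"
      using mult_add_distrib_mat_vec[OF aK Kx as] mult_mat_vec[OF aK s] Ks
        assoc_mult_mat_vec[OF aK K x] mult_mat_vec_carrier[OF aK Kx] by simp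
    also have "cinner (K *\<^sub>v x + \<alpha> \<cdot>\<^sub>v s) s = \<alpha> * c"
      using cinner_add_left[OF Kx as] cinner_adj[OF K x s] Ks x norms
      by (simp add: cinner_smult_left c_def)
    finally show ?thesis
      by (cases "c = 0") (auto simp: \<alpha>_def c_def)
  qed
  show "orth_proj N (adj K' * K')"
    by (rule orth_proj_add_rank_one[OF P r Pr]) (use K' adj_mult[OF adj_carrier[OF K'] K'] P'x in auto)
qed

text \<open>\<open>r\<close> is the part of \<open>\<phi> m\<close> outside the initial space of \<open>K\<close>, \<open>s\<close> the part of \<open>\<psi> m\<close> outside its
  final space; the equal Gram matrices make them equally long.\<close>

lemma partial_isometry_mapping_residuals:
  assumes PI: "partial_isometry_mapping N K \<phi> \<psi> m"
    and \<phi>: "\<And>a. a \<le> m \<Longrightarrow> \<phi> a \<in> carrier_vec N" and \<psi>: "\<And>a. a \<le> m \<Longrightarrow> \<psi> a \<in> carrier_vec N"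
    and gram: "\<And>a b. a \<le> m \<Longrightarrow> b \<le> m \<Longrightarrow> cinner (\<phi> a) (\<phi> b) = cinner (\<psi> a) (\<psi> b)"
  defines "r \<equiv> \<phi> m - adj K * K *\<^sub>v \<phi> m" and "s \<equiv> \<psi> m - K *\<^sub>v \<phi> m"
  shows "\<forall>a<m. cinner (\<phi> a) r = 0" and "adj K * K *\<^sub>v r = 0\<^sub>v N" and "adj K *\<^sub>v s = 0\<^sub>v N"
    and "cinner (\<phi> m) r = cinner r r" and "cinner s s = cinner r r"
proof -
  define P where "P = adj K * K"
  have K: "K \<in> carrier_mat N N" and P: "orth_proj N P"
    and K\<phi>: "\<forall>a<m. K *\<^sub>v \<phi> a = \<psi> a \<and> P *\<^sub>v \<phi> a = \<phi> a"
    and ran: "\<forall>y\<in>carrier_vec N. (\<forall>a<m. cinner y (\<psi> a) = 0) \<longrightarrow> adj K *\<^sub>v y = 0\<^sub>v N"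
    using PI by (auto simp: partial_isometry_mapping_def P_def)
  have Pc: "P \<in> carrier_mat N N" and aP: "adj P = P" using P by (auto simp: orth_proj_def)
  define f where "f = \<phi> m"
  define g where "g = \<psi> m"
  have f: "f \<in> carrier_vec N" and g: "g \<in> carrier_vec N" using \<phi> \<psi> by (auto simp: f_def g_def)
  have Pf: "P *\<^sub>v f \<in> carrier_vec N" and Kf: "K *\<^sub>v f \<in> carrier_vec N" using Pc K f by auto
  have r: "r \<in> carrier_vec N" and s: "s \<in> carrier_vec N"
    using f g Pc K by (auto simp: r_def s_def f_def g_def P_def)
  have PK: "cinner (K *\<^sub>v x) (K *\<^sub>v y) = cinner x (P *\<^sub>v y)"
    if "x \<in> carrier_vec N" "y \<in> carrier_vec N" for x y
    using cinner_adj[OF K that(1)] assoc_mult_mat_vec[OF adj_carrier[OF K] K that(2)] K that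
    by (simp add: P_def)
  have f_Pf: "cinner (\<phi> a) (P *\<^sub>v f) = cinner (\<phi> a) f" if a: "a < m" for a
    using cinner_adj[OF Pc _ f, of "\<phi> a"] aP K\<phi> a \<phi>[of a] by simp
  show r_orth: "\<forall>a<m. cinner (\<phi> a) r = 0"
    using cinner_diff_right[OF f Pf] f_Pf \<phi> by (simp add: r_def f_def P_def)
  show Pr: "adj K * K *\<^sub>v r = 0\<^sub>v N"
    using mult_minus_distrib_mat_vec[OF Pc f Pf] orth_proj_mult_vec_idem[OF P f] Pf
    by (simp add: r_def f_def P_def)
  have "adj K *\<^sub>v s = 0\<^sub>v N" if "\<forall>a<m. cinner s (\<psi> a) = 0" using ran s that by blast
  moreover have "cinner (\<psi> a) s = 0" if a: "a < m" for a
  proof -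
    have "cinner (\<psi> a) (K *\<^sub>v f) = cinner (\<phi> a) f"
      using PK[OF \<phi>[of a] f] K\<phi> f_Pf a by simp
    then show ?thesis using gram[of a m] a cinner_diff_right[OF g Kf] \<psi>[of a]
      by (simp add: s_def f_def g_def)
  qed
  ultimately show Ks: "adj K *\<^sub>v s = 0\<^sub>v N"
    using cinner_commute \<psi> s by (metis carrier_vecD complex_cnj_zero less_imp_le)
  have "cinner (P *\<^sub>v f) r = 0" using cinner_adj[OF Pc f r] aP Pr f by (simp add: P_def)
  then show fr: "cinner (\<phi> m) r = cinner r r"
    using cinner_diff_left[OF f Pf, of r] by (simp add: r_def f_def P_def)
  have "cinner (K *\<^sub>v f) s = 0" using cinner_adj[OF K f s] Ks f by simp
  then have "cinner s (K *\<^sub>v f) = 0" using cinner_commute[of "K *\<^sub>v f" s] K s by simp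
  then have "cinner g (K *\<^sub>v f) = cinner (K *\<^sub>v f) (K *\<^sub>v f)"
    using cinner_diff_left[OF g Kf, of "K *\<^sub>v f"] by (simp add: s_def g_def f_def)
  then have "cinner s s = cinner g g - cinner (K *\<^sub>v f) (K *\<^sub>v f)"
    using cinner_diff_left[OF g Kf, of s] cinner_diff_right[OF g Kf g] \<open>cinner (K *\<^sub>v f) s = 0\<close>
    by (simp add: s_def g_def f_def)
  also have "\<dots> = cinner f f - cinner f (P *\<^sub>v f)" using PK[OF f f] gram[of m m] by (simp add: f_def g_def)
  also have "\<dots> = cinner r r" using fr cinner_diff_right[OF f Pf f] by (simp add: r_def f_def P_def)
  finally show "cinner s s = cinner r r" .
qed

lemma partial_isometry_mapping_Suc:
  assumes PI: "partial_isometry_mapping N K \<phi> \<psi> m"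
    and \<phi>: "\<And>a. a \<le> m \<Longrightarrow> \<phi> a \<in> carrier_vec N" and \<psi>: "\<And>a. a \<le> m \<Longrightarrow> \<psi> a \<in> carrier_vec N"
    and gram: "\<And>a b. a \<le> m \<Longrightarrow> b \<le> m \<Longrightarrow> cinner (\<phi> a) (\<phi> b) = cinner (\<psi> a) (\<psi> b)"
  shows "\<exists>K'. partial_isometry_mapping N K' \<phi> \<psi> (Suc m)"
proof -
  define r where "r = \<phi> m - adj K * K *\<^sub>v \<phi> m"
  define s where "s = \<psi> m - K *\<^sub>v \<phi> m"
  have res: "\<forall>a<m. cinner (\<phi> a) r = 0" "adj K * K *\<^sub>v r = 0\<^sub>v N" "adj K *\<^sub>v s = 0\<^sub>v N"
    "cinner (\<phi> m) r = cinner r r" "cinner s s = cinner r r"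
    using partial_isometry_mapping_residuals[of N K \<phi> \<psi> m] PI \<phi> \<psi> gram
    unfolding r_def s_def by blast+
  have K: "K \<in> carrier_mat N N" and P: "orth_proj N (adj K * K)"
    and K\<phi>: "\<forall>a<m. K *\<^sub>v \<phi> a = \<psi> a \<and> adj K * K *\<^sub>v \<phi> a = \<phi> a"
    and ran: "\<forall>y\<in>carrier_vec N. (\<forall>a<m. cinner y (\<psi> a) = 0) \<longrightarrow> adj K *\<^sub>v y = 0\<^sub>v N"
    using PI by (auto simp: partial_isometry_mapping_def)
  have Pc: "adj K * K \<in> carrier_mat N N" using P by (simp add: orth_proj_def)
  have \<phi>m: "\<phi> m = adj K * K *\<^sub>v \<phi> m + r" and \<psi>m: "\<psi> m = K *\<^sub>v \<phi> m + s"
    using \<phi>[of m] \<psi>[of m] K Pc by (auto simp: r_def s_def intro!: eq_vecI)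
  have r: "r \<in> carrier_vec N" and s: "s \<in> carrier_vec N"
    using \<phi>[of m] \<psi>[of m] K Pc by (auto simp: r_def s_def)
  have s_orth: "cinner y s = 0"
    if y: "y \<in> carrier_vec N" "\<forall>a<Suc m. cinner y (\<psi> a) = 0" for y
  proof -
    have "adj K *\<^sub>v y = 0\<^sub>v N" using ran y by auto
    then have "cinner (K *\<^sub>v \<phi> m) y = 0" using cinner_adj[OF K \<phi>[of m] y(1)] \<phi>[of m] by simp
    then have "cinner y (K *\<^sub>v \<phi> m) = 0" using cinner_commute[of "K *\<^sub>v \<phi> m" y] K y(1) by simp
    then show ?thesis using cinner_diff_right[OF \<psi>[of m] _ y(1), of "K *\<^sub>v \<phi> m"] K \<phi>[of m] y(2)
      by (simp add: s_def)
  qed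
  show ?thesis
  proof (cases "r = 0\<^sub>v N")
    case True
    then have "s = 0\<^sub>v N" using res(5) cinner_self_eq_0[OF r] cinner_self_eq_0[OF s] by simp
    then have "partial_isometry_mapping N K \<phi> \<psi> (Suc m)"
      using PI \<phi>m \<psi>m True K \<phi>[of m] Pc
      by (auto simp: partial_isometry_mapping_def less_Suc_eq)
    then show ?thesis ..
  next
    case False
    then have c: "cinner r r \<noteq> 0" using cinner_self_eq_0[OF r] by simp
    define K' where "K' = K + (1 / cinner r r) \<cdot>\<^sub>m outer_prod s r"
    note K' = partial_isometry_add_rank_one[OF K P r s res(2,3,5), folded K'_def]
    have "K' *\<^sub>v \<phi> a = \<psi> a \<and> adj K' * K' *\<^sub>v \<phi> a = \<phi> a" if a: "a < Suc m" for a
    proof (cases "a < m")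
      case True
      then show ?thesis using K'(2,4)[OF \<phi>[of a]] res(1) K\<phi> \<phi>[of a] \<psi>[of a] r s by simp
    next
      case False
      then have "a = m" using a by simp
      then show ?thesis using K'(2,4)[OF \<phi>[of m]] res(4) c \<phi>m \<psi>m K Pc \<phi>[of m] r s
        by (simp add: comm_add_vec)
    qed
    moreover have "adj K' *\<^sub>v y = 0\<^sub>v N"
      if "y \<in> carrier_vec N" "\<forall>a<Suc m. cinner y (\<psi> a) = 0" for y
      using K'(3)[OF that(1)] s_orth[OF that] ran that r by simp
    ultimately have "partial_isometry_mapping N K' \<phi> \<psi> (Suc m)"
      using K'(1,5) by (simp add: partial_isometry_mapping_def)
    then show ?thesis ..
  qed
qed

lemma partial_isometry_mapping_exists:
  assumes \<phi>: "\<And>a. a < m \<Longrightarrow> \<phi> a \<in> carrier_vec N" and \<psi>: "\<And>a. a < m \<Longrightarrow> \<psi> a \<in> carrier_vec N"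
    and gram: "\<And>a b. a < m \<Longrightarrow> b < m \<Longrightarrow> cinner (\<phi> a) (\<phi> b) = cinner (\<psi> a) (\<psi> b)"
  shows "\<exists>K. partial_isometry_mapping N K \<phi> \<psi> m"
  using assms
proof (induction m)
  case 0
  show ?case using partial_isometry_mapping_0 by blast
next
  case (Suc m)
  then obtain K where "partial_isometry_mapping N K \<phi> \<psi> m" by auto
  then show ?case by (rule partial_isometry_mapping_Suc) (use Suc.prems in auto)
qed

section \<open>Purifications\<close>

text \<open>\<open>sum_tensor_basis l n u\<close> is \<open>\<Sum>\<^sub>k u\<^sub>k \<otimes> e\<^sub>k \<in> \<complex>\<^sup>l \<otimes> \<complex>\<^sup>n\<close> (\<open>k < n\<close>), and \<open>vec_block N v a\<close> is the
  component of \<open>v \<in> \<complex>\<^sup>m \<otimes> \<complex>\<^sup>N\<close> along \<open>e\<^sub>a\<close> in the first factor.\<close>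

definition sum_tensor_basis :: "nat \<Rightarrow> nat \<Rightarrow> (nat \<Rightarrow> complex vec) \<Rightarrow> complex vec" where
  "sum_tensor_basis l n u = vec (l*n) (\<lambda>i. u (i mod n) $ (i div n))"

definition vec_block :: "nat \<Rightarrow> complex vec \<Rightarrow> nat \<Rightarrow> complex vec" where
  "vec_block N v a = vec N (\<lambda>r. v $ (a*N + r))"

lemma sum_tensor_basis_carrier [simp]: "sum_tensor_basis l n u \<in> carrier_vec (l*n)"
  by (simp add: sum_tensor_basis_def)

lemma dim_sum_tensor_basis [simp]: "dim_vec (sum_tensor_basis l n u) = l*n"
  by (simp add: sum_tensor_basis_def)

lemma sum_tensor_basis_cong:
  assumes "\<forall>k<n. u k = u' k"
  shows "sum_tensor_basis l n u = sum_tensor_basis l n u'"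
proof (rule eq_vecI)
  fix i assume "i < dim_vec (sum_tensor_basis l n u')"
  then have "0 < n" by (cases n) (auto simp: sum_tensor_basis_def)
  then show "sum_tensor_basis l n u $ i = sum_tensor_basis l n u' $ i"
    using assms \<open>i < _\<close> by (simp add: sum_tensor_basis_def)
qed (simp add: sum_tensor_basis_def)

lemma index_sum_tensor_basis:
  "i < l \<Longrightarrow> k < n \<Longrightarrow> sum_tensor_basis l n u $ (i*n + k) = u k $ i"
  by (simp add: sum_tensor_basis_def pair_index_less)

lemma ptrace2_outer_prod_sum_tensor_basis:
  assumes "0 < n"
  shows "ptrace2 n (outer_prod (sum_tensor_basis l n u) (sum_tensor_basis l n u)) = sum_outer_prod l {..<n} u"
  using assms pair_index_less by (intro eq_matI) (auto simp: ptrace2_def sum_outer_prod_def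
      index_sum_tensor_basis intro!: sum.cong)

lemma cinner_sum_tensor_basis:
  "cinner (sum_tensor_basis l n u) (sum_tensor_basis l n u) = (\<Sum>k<n. cinner (u k) (u k))"
  if "\<forall>k<n. u k \<in> carrier_vec l"
proof -
  have "cinner (sum_tensor_basis l n u) (sum_tensor_basis l n u) = (\<Sum>i<l. \<Sum>k<n. u k $ i * cnj (u k $ i))"
    by (simp add: cinner_def sum_pair_index index_sum_tensor_basis)
  also have "\<dots> = (\<Sum>k<n. cinner (u k) (u k))"
    using that by (subst sum.swap) (auto simp: cinner_def intro!: sum.cong)
  finally show ?thesis .
qed

lemma kron_one_right_mult_sum_tensor_basis:
  assumes E: "E \<in> carrier_mat p l" and u: "\<forall>k<n. u k \<in> carrier_vec l"
  shows "kron E (1\<^sub>m n) *\<^sub>v sum_tensor_basis l n u = sum_tensor_basis p n (\<lambda>k. E *\<^sub>v u k)"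
proof (rule eq_vecI)
  fix i assume "i < dim_vec (sum_tensor_basis p n (\<lambda>k. E *\<^sub>v u k))"
  then have i: "i < p*n" by (simp add: sum_tensor_basis_def)
  then have n: "0 < n" by (cases n) auto
  have id: "i div n < p" using i by (simp add: less_mult_imp_div_less)
  have im: "i mod n < n" using n by simp
  have dims: "dim_row (kron E (1\<^sub>m n)) = p*n" "dim_col (kron E (1\<^sub>m n)) = l*n"
    using kron_one_right_carrier[OF E] by auto
  have "(kron E (1\<^sub>m n) *\<^sub>v sum_tensor_basis l n u) $ i
      = (\<Sum>v<l*n. kron E (1\<^sub>m n) $$ (i,v) * sum_tensor_basis l n u $ v)"
    unfolding index_mult_mat_vec[of i "kron E (1\<^sub>m n)", unfolded dims, OF i] scalar_prod_def
    using dims i by (intro sum.cong) auto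
  also have "\<dots> = (\<Sum>j<l. \<Sum>y<n. kron E (1\<^sub>m n) $$ (i, j*n+y) * sum_tensor_basis l n u $ (j*n+y))"
    by (rule sum_pair_index)
  also have "\<dots> = (\<Sum>j<l. E $$ (i div n, j) * u (i mod n) $ j)"
  proof (intro sum.cong refl)
    fix j assume "j \<in> {..<l}"
    then have "kron E (1\<^sub>m n) $$ (i, j*n+y) * sum_tensor_basis l n u $ (j*n+y)
        = (if y = i mod n then E $$ (i div n, j) * u y $ j else 0)" if "y < n" for y
      using E i id that pair_index_less[of j l y n] by (auto simp: kron_def index_sum_tensor_basis)
    then have "(\<Sum>y<n. kron E (1\<^sub>m n) $$ (i, j*n+y) * sum_tensor_basis l n u $ (j*n+y))
        = (\<Sum>y<n. if y = i mod n then E $$ (i div n, j) * u y $ j else 0)"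
      by (intro sum.cong) auto
    then show "(\<Sum>y<n. kron E (1\<^sub>m n) $$ (i, j*n+y) * sum_tensor_basis l n u $ (j*n+y))
        = E $$ (i div n, j) * u (i mod n) $ j"
      using im by simp
  qed
  also have "\<dots> = sum_tensor_basis p n (\<lambda>k. E *\<^sub>v u k) $ i"
  proof -
    have "u (i mod n) \<in> carrier_vec l" using u im by simp
    then show ?thesis
      using E id i by (simp add: sum_tensor_basis_def scalar_prod_def lessThan_atLeast0)
  qed
  finally show "(kron E (1\<^sub>m n) *\<^sub>v sum_tensor_basis l n u) $ i = sum_tensor_basis p n (\<lambda>k. E *\<^sub>v u k) $ i" .
qed (use E in \<open>auto simp: kron_def sum_tensor_basis_def\<close>)

lemma vec_block_carrier [simp]: "vec_block N v a \<in> carrier_vec N"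
  by (simp add: vec_block_def)

lemma ptrace2_outer_prod_eq_cinner_blocks:
  assumes v: "v \<in> carrier_vec (m*N)" and N: "0 < N" and a: "a < m" and b: "b < m"
  shows "ptrace2 N (outer_prod v v) $$ (a,b) = cinner (vec_block N v a) (vec_block N v b)"
proof -
  have "outer_prod v v \<in> carrier_mat (m*N) (m*N)" using outer_prod_carrier[of v v] v by simp
  then show ?thesis
    using index_ptrace2[OF _ N a b] v a b pair_index_less
    by (auto simp: cinner_def vec_block_def intro!: sum.cong)
qed

lemma kron_one_left_mult_vec_eqI:
  assumes K: "K \<in> carrier_mat N N" and v: "v \<in> carrier_vec (m*N)" and w: "w \<in> carrier_vec (m*N)"
    and blocks: "\<And>a. a < m \<Longrightarrow> K *\<^sub>v vec_block N v a = vec_block N w a"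
  shows "kron (1\<^sub>m m) K *\<^sub>v v = w"
proof (rule eq_vecI)
  fix i assume "i < dim_vec w"
  then have i: "i < m*N" using w by simp
  then have N: "0 < N" by (cases N) auto
  have id: "i div N < m" using i by (simp add: less_mult_imp_div_less)
  have im: "i mod N < N" using N by simp
  have dims: "dim_row (kron (1\<^sub>m m) K) = m*N" "dim_col (kron (1\<^sub>m m) K) = m*N"
    using kron_one_left_carrier[OF K] by auto
  have "(kron (1\<^sub>m m) K *\<^sub>v v) $ i = (\<Sum>u<m*N. kron (1\<^sub>m m) K $$ (i,u) * v $ u)"
    unfolding index_mult_mat_vec[of i "kron (1\<^sub>m m) K", unfolded dims, OF i] scalar_prod_def
    using dims i v by (intro sum.cong) auto
  also have "\<dots> = (\<Sum>x<m. \<Sum>t<N. kron (1\<^sub>m m) K $$ (i, x*N+t) * v $ (x*N+t))"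
    by (rule sum_pair_index)
  also have "\<dots> = (\<Sum>x<m. if x = i div N then (\<Sum>t<N. K $$ (i mod N, t) * v $ (x*N+t)) else 0)"
    by (intro sum.cong refl) (use K i pair_index_less index_kron_one_left[OF K i] in auto)
  also have "\<dots> = (\<Sum>t<N. K $$ (i mod N, t) * v $ ((i div N)*N+t))"
    using id by simp
  also have "\<dots> = (K *\<^sub>v vec_block N v (i div N)) $ (i mod N)"
    using K im by (simp add: vec_block_def scalar_prod_def lessThan_atLeast0)
  also have "\<dots> = w $ i" using blocks[OF id] im by (simp add: vec_block_def)
  finally show "(kron (1\<^sub>m m) K *\<^sub>v v) $ i = w $ i" .
qed (use K w in \<open>auto simp: kron_def\<close>)

lemma kraus_partial_isometry_completion:
  assumes K: "K \<in> carrier_mat N N" and P: "orth_proj N (adj K * K)"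
  shows "kraus N [K, 1\<^sub>m N - adj K * K]"
proof -
  define Q where "Q = 1\<^sub>m N - adj K * K"
  have "orth_proj N Q" unfolding Q_def by (rule orth_proj_complement[OF P])
  then have Q: "Q \<in> carrier_mat N N" and QQ: "adj Q * Q = Q" by (auto simp: orth_proj_def)
  have "msum N [adj K * K, Q] = 1\<^sub>m N"
    using P by (intro eq_matI) (auto simp: Q_def orth_proj_def)
  then show ?thesis using K Q QQ by (simp add: kraus_def Q_def)
qed

text \<open>The blocks of the two states have equal Gram matrices, so a partial isometry maps one family
  onto the other.\<close>

lemma equal_marginal_pure_states_related:
  assumes \<Phi>: "\<Phi> \<in> carrier_vec (m*N)" and \<Psi>: "\<Psi> \<in> carrier_vec (m*N)" and N: "0 < N"
    and marginal: "ptrace2 N (outer_prod \<Phi> \<Phi>) = ptrace2 N (outer_prod \<Psi> \<Psi>)"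
  shows "\<exists>Ks. kraus N Ks \<and>
    apply_kraus (m*N) (map (\<lambda>K. kron (1\<^sub>m m) K) Ks) (outer_prod \<Phi> \<Phi>) = outer_prod \<Psi> \<Psi>"
proof -
  have "cinner (vec_block N \<Phi> a) (vec_block N \<Phi> b) = cinner (vec_block N \<Psi> a) (vec_block N \<Psi> b)"
    if "a < m" "b < m" for a b
    using marginal ptrace2_outer_prod_eq_cinner_blocks[OF \<Phi> N that]
      ptrace2_outer_prod_eq_cinner_blocks[OF \<Psi> N that] by simp
  then obtain K where "partial_isometry_mapping N K (vec_block N \<Phi>) (vec_block N \<Psi>) m"
    using partial_isometry_mapping_exists by (metis vec_block_carrier)
  then have K: "K \<in> carrier_mat N N" and P: "orth_proj N (adj K * K)"
    and blocks: "\<forall>a<m. K *\<^sub>v vec_block N \<Phi> a = vec_block N \<Psi> a \<and>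
      adj K * K *\<^sub>v vec_block N \<Phi> a = vec_block N \<Phi> a"
    by (auto simp: partial_isometry_mapping_def)
  define Q where "Q = 1\<^sub>m N - adj K * K"
  have Q: "Q \<in> carrier_mat N N"
    unfolding Q_def using minus_carrier_mat[OF mult_carrier_mat[OF adj_carrier[OF K] K]] by simp
  have "kron (1\<^sub>m m) K *\<^sub>v \<Phi> = \<Psi>"
    by (rule kron_one_left_mult_vec_eqI[OF K \<Phi> \<Psi>]) (use blocks in auto)
  moreover have "kron (1\<^sub>m m) Q *\<^sub>v \<Phi> = 0\<^sub>v (m*N)"
  proof (rule kron_one_left_mult_vec_eqI[OF Q \<Phi>])
    fix a assume "a < m"
    then have "Q *\<^sub>v vec_block N \<Phi> a = 0\<^sub>v N"
      using blocks one_minus_mult_vec[of "adj K * K" N "vec_block N \<Phi> a"] P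
      by (auto simp: Q_def orth_proj_def intro!: eq_vecI)
    then show "Q *\<^sub>v vec_block N \<Phi> a = vec_block N (0\<^sub>v (m*N)) a"
      using \<open>a < m\<close> pair_index_less by (auto simp: vec_block_def intro!: eq_vecI)
  qed simp
  ultimately have "apply_kraus (m*N) (map (\<lambda>K. kron (1\<^sub>m m) K) [K, Q]) (outer_prod \<Phi> \<Phi>)
      = outer_prod \<Psi> \<Psi>"
    using conj_outer_prod[OF kron_one_left_carrier[OF K] \<Phi>]
      conj_outer_prod[OF kron_one_left_carrier[OF Q] \<Phi>] \<Psi>
    by (intro eq_matI) (auto simp: apply_kraus_def)
  then show ?thesis using kraus_partial_isometry_completion[OF K P] by (auto simp: Q_def)
qed

section \<open>The two inclusions\<close>

lemma density_dim_pos: "density N M \<Longrightarrow> 0 < N"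
  by (cases N) (auto simp: density_def tr_def)

lemma isometry_dim_pos:
  assumes E: "E \<in> carrier_mat n l" and iso: "adj E * E = 1\<^sub>m l" and l: "0 < l"
  shows "0 < n"
proof (rule ccontr)
  assume "\<not> 0 < n"
  then have "(adj E * E) $$ (0,0) = 0" using E l by (simp add: scalar_prod_def)
  then show False using iso l by simp
qed

lemma state_in_conj_isometry:
  assumes P: "orth_proj n P" and E: "E \<in> carrier_mat n l" and iso: "adj E * E = 1\<^sub>m l"
    and PE: "P * E = E" and \<tau>: "density l \<tau>"
  shows "state_in n P (E * \<tau> * adj E)"
proof -
  have Pc: "P \<in> carrier_mat n n" using P by (simp add: orth_proj_def)
  have \<tau>c: "\<tau> \<in> carrier_mat l l" and tr\<tau>: "tr \<tau> = 1" using \<tau> by (auto simp: density_def)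
  have "tr (E * \<tau> * adj E) = 1" using tr_conj_isometry[OF E iso \<tau>c] tr\<tau> by simp
  moreover have "P * (E * \<tau> * adj E) = E * \<tau> * adj E"
  proof -
    have "E * \<tau> \<in> carrier_mat n l" using E \<tau>c by simp
    then have "P * (E * \<tau> * adj E) = P * (E * \<tau>) * adj E"
      using assoc_mult_mat[OF Pc _ adj_carrier[OF E]] by simp
    then show ?thesis using assoc_mult_mat[OF Pc E \<tau>c] PE by simp
  qed
  ultimately show ?thesis
    using hermitian_psd_conj[OF _ E, of \<tau>] \<tau>
    by (simp add: state_in_def density_iff_hermitian_psd)
qed

lemma experiment_outcome_in_ST_B:
  assumes P: "orth_proj (dA*dB) PC" and E: "E \<in> carrier_mat (dA*dB) dL"
    and iso: "adj E * E = 1\<^sub>m dL" and PE: "PC * E = E"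
    and dX: "0 < dX" and \<sigma>: "density (dL*dX) \<sigma>" and Ks: "kraus (dB*dX) Ks"
  shows "experiment_outcome dA E dX \<sigma> Ks \<in> ST_B dA dB PC"
proof -
  define F where "F = kron E (1\<^sub>m dX)"
  define enc where "enc = F * \<sigma> * adj F"
  define AK where "AK = apply_kraus (dA*dB*dX) (map (\<lambda>K. kron (1\<^sub>m dA) K) Ks) enc"
  have "0 < dA*dB" using isometry_dim_pos[OF E iso] density_dim_pos[OF \<sigma>] by simp
  then have dB: "0 < dB" by simp
  have \<sigma>c: "\<sigma> \<in> carrier_mat (dL*dX) (dL*dX)" using \<sigma> by (simp add: density_def)
  have F: "F \<in> carrier_mat (dA*dB*dX) (dL*dX)" using E by (simp add: F_def)
  then have enc: "enc \<in> carrier_mat (dA*(dB*dX)) (dA*(dB*dX))" using \<sigma>c by (simp add: enc_def mult.assoc)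
  have psd_enc: "hermitian_psd (dA*dB*dX) enc"
    unfolding enc_def using hermitian_psd_conj[OF _ F] \<sigma> by (simp add: density_iff_hermitian_psd)
  have enc_marginal: "ptrace2 dX enc = E * ptrace2 dX \<sigma> * adj E"
    unfolding enc_def F_def by (rule ptrace2_conj_kron_one_right[OF E \<sigma>c dX])
  then have st: "state_in (dA*dB) PC (ptrace2 dX enc)"
    using state_in_conj_isometry[OF P E iso PE density_ptrace2[OF \<sigma> dX]] by simp
  have AK_marginal: "ptrace2 (dB*dX) AK = ptrace2 (dB*dX) enc"
    using ptrace2_apply_kraus_kron_one_left[OF Ks enc] dB dX by (simp add: AK_def mult.assoc)
  have AK: "AK \<in> carrier_mat (dA*dB*dX) (dA*dB*dX)" by (simp add: AK_def apply_kraus_def)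
  have enc': "enc \<in> carrier_mat (dA*dB*dX) (dA*dB*dX)" using enc by (simp add: mult.assoc)
  have "tr AK = tr enc"
    using AK_marginal tr_ptrace2[of AK dA "dB*dX"] tr_ptrace2[OF enc] AK dB dX by (simp add: mult.assoc)
  also have "\<dots> = 1" using st tr_ptrace2[OF enc' dX] by (simp add: state_in_def density_def)
  moreover have "hermitian_psd (dA*dB*dX) AK"
    unfolding AK_def using Ks kron_one_left_carrier[of _ "dB*dX" dA]
    by (intro hermitian_psd_apply_kraus[OF psd_enc]) (auto simp: kraus_def mult.assoc)
  ultimately have "density (dA*dB) (ptrace2 dX AK)"
    using density_ptrace2[OF _ dX] by (simp add: density_iff_hermitian_psd)
  moreover have "ptrace2 dB (ptrace2 dX AK) = ptrace2 dB (ptrace2 dX enc)"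
    using ptrace2_ptrace2[OF AK dB dX] ptrace2_ptrace2[OF enc' dB dX] AK_marginal by simp
  moreover have "experiment_outcome dA E dX \<sigma> Ks = ptrace2 dX AK"
    using E by (simp add: experiment_outcome_def AK_def enc_def F_def)
  ultimately show ?thesis using st unfolding ST_B_def by auto
qed

text \<open>The rank-one terms of the state lie in the range of the encoding, so its purification over an
  auxiliary space of dimension \<open>n\<close> is the encoding of a unit vector.\<close>

lemma state_in_encoded_purification:
  assumes P: "orth_proj n PC" and E: "E \<in> carrier_mat n dL" and iso: "adj E * E = 1\<^sub>m dL"
    and range: "{PC *\<^sub>v v | v. v \<in> carrier_vec n} \<subseteq> (\<lambda>v. E *\<^sub>v v) ` carrier_vec dL"
    and st: "state_in n PC \<rho>'"
  obtains s where "s \<in> carrier_vec (dL*n)" "cinner s s = 1"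
    "ptrace2 n (outer_prod (kron E (1\<^sub>m n) *\<^sub>v s) (kron E (1\<^sub>m n) *\<^sub>v s)) = \<rho>'"
proof -
  have \<rho>': "density n \<rho>'" and trP: "tr (PC * \<rho>') = 1" using st by (auto simp: state_in_def)
  have n: "0 < n" using density_dim_pos[OF \<rho>'] .
  obtain w where w: "\<forall>k. w k \<in> carrier_vec n" and \<rho>'_eq: "\<rho>' = sum_outer_prod n {..<n} w"
    using hermitian_psd_eq_sum_outer_prod[of n \<rho>'] \<rho>' unfolding density_iff_hermitian_psd by blast
  have "PC *\<^sub>v w k = w k" if "k < n" for k
    by (rule sum_outer_prod_in_range[OF P _ _ that]) (use w trP \<rho>' \<rho>'_eq in \<open>auto simp: density_def\<close>)
  then have "w k \<in> {PC *\<^sub>v v | v. v \<in> carrier_vec n}" if "k < n" for k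
    using w that by (intro CollectI exI[of _ "w k"]) auto
  then have "\<forall>k\<in>{..<n}. \<exists>u. u \<in> carrier_vec dL \<and> E *\<^sub>v u = w k"
    using range by fastforce
  then obtain u where u: "\<forall>k<n. u k \<in> carrier_vec dL \<and> E *\<^sub>v u k = w k"
    using bchoice[of "{..<n}" "\<lambda>k u. u \<in> carrier_vec dL \<and> E *\<^sub>v u = w k"] by auto
  define s where "s = sum_tensor_basis dL n u"
  have Es: "kron E (1\<^sub>m n) *\<^sub>v s = sum_tensor_basis n n w"
    unfolding s_def using kron_one_right_mult_sum_tensor_basis[OF E, of n u] u
    by (simp add: sum_tensor_basis_cong[of n "\<lambda>k. E *\<^sub>v u k" w])
  have "cinner (u k) (u k) = cinner (w k) (w k)" if "k < n" for k
    using cinner_isometry[OF E iso, of "u k"] u that by simp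
  then have "cinner s s = (\<Sum>k<n. cinner (w k) (w k))"
    unfolding s_def using cinner_sum_tensor_basis[of n u dL] u by simp
  also have "\<dots> = 1" using tr_sum_outer_prod[of "{..<n}" w n] w \<rho>' \<rho>'_eq by (simp add: density_def)
  finally show ?thesis
    using that[of s] Es ptrace2_outer_prod_sum_tensor_basis[OF n] \<rho>'_eq by (simp add: s_def)
qed

lemma ST_B_imp_experiment_outcome:
  assumes P: "orth_proj (dA*dB) PC" and E: "E \<in> carrier_mat (dA*dB) dL"
    and iso: "adj E * E = 1\<^sub>m dL"
    and range: "{PC *\<^sub>v v | v. v \<in> carrier_vec (dA*dB)} \<subseteq> (\<lambda>v. E *\<^sub>v v) ` carrier_vec dL"
    and \<rho>: "\<rho> \<in> ST_B dA dB PC"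
  shows "\<exists>dX \<sigma> Ks. \<rho> = experiment_outcome dA E dX \<sigma> Ks \<and> 0 < dX \<and> density (dL*dX) \<sigma> \<and> kraus (dB*dX) Ks"
proof -
  define n where "n = dA*dB"
  obtain \<rho>' where \<rho>_density: "density n \<rho>" and st: "state_in n PC \<rho>'"
    and marginal: "ptrace2 dB \<rho> = ptrace2 dB \<rho>'"
    using \<rho> unfolding ST_B_def n_def by blast
  have n: "0 < n" using density_dim_pos[OF \<rho>_density] .
  then have dB: "0 < dB" by (simp add: n_def)
  obtain s where s: "s \<in> carrier_vec (dL*n)" "cinner s s = 1"
    and \<Phi>: "ptrace2 n (outer_prod (kron E (1\<^sub>m n) *\<^sub>v s) (kron E (1\<^sub>m n) *\<^sub>v s)) = \<rho>'"
    using state_in_encoded_purification[of n PC E dL] P E iso range st by (auto simp: n_def)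
  define \<Phi> where "\<Phi> = kron E (1\<^sub>m n) *\<^sub>v s"
  obtain v where "\<forall>k. v k \<in> carrier_vec n" and \<rho>_eq: "\<rho> = sum_outer_prod n {..<n} v"
    using hermitian_psd_eq_sum_outer_prod[of n \<rho>] \<rho>_density unfolding density_iff_hermitian_psd by blast
  define \<Psi> where "\<Psi> = sum_tensor_basis n n v"
  have \<Psi>: "ptrace2 n (outer_prod \<Psi> \<Psi>) = \<rho>"
    unfolding \<Psi>_def \<rho>_eq by (rule ptrace2_outer_prod_sum_tensor_basis[OF n])
  have nn: "n * n = dA*(dB*n)" by (simp add: n_def)
  have "\<Phi> \<in> carrier_vec (n*n)"
    using mult_mat_vec_carrier[OF kron_one_right_carrier[of E n dL n] s(1)] E by (simp add: \<Phi>_def n_def)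
  then have \<Phi>c: "\<Phi> \<in> carrier_vec (dA*(dB*n))" by (simp only: nn)
  have \<Psi>c: "\<Psi> \<in> carrier_vec (dA*(dB*n))" unfolding \<Psi>_def nn[symmetric] by simp
  have O\<Phi>: "outer_prod \<Phi> \<Phi> \<in> carrier_mat (dA*dB*n) (dA*dB*n)"
    and O\<Psi>: "outer_prod \<Psi> \<Psi> \<in> carrier_mat (dA*dB*n) (dA*dB*n)"
    using outer_prod_carrier[of \<Phi> \<Phi>] outer_prod_carrier[of \<Psi> \<Psi>] \<Phi>c \<Psi>c by (auto simp: mult.assoc)
  have "ptrace2 (dB*n) (outer_prod \<Phi> \<Phi>) = ptrace2 dB \<rho>'"
    using ptrace2_ptrace2[OF O\<Phi> dB n] \<Phi> by (simp add: \<Phi>_def)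
  also have "\<dots> = ptrace2 (dB*n) (outer_prod \<Psi> \<Psi>)"
    using ptrace2_ptrace2[OF O\<Psi> dB n] \<Psi> marginal by simp
  finally have "ptrace2 (dB*n) (outer_prod \<Phi> \<Phi>) = ptrace2 (dB*n) (outer_prod \<Psi> \<Psi>)" .
  then obtain Ks where Ks: "kraus (dB*n) Ks"
    and transform: "apply_kraus (dA*(dB*n)) (map (\<lambda>K. kron (1\<^sub>m dA) K) Ks) (outer_prod \<Phi> \<Phi>) = outer_prod \<Psi> \<Psi>"
    using equal_marginal_pure_states_related[OF \<Phi>c \<Psi>c] dB n by auto
  have "experiment_outcome dA E n (outer_prod s s) Ks = \<rho>"
    using conj_outer_prod[OF kron_one_right_carrier[OF E] s(1)] transform \<Psi> E
    by (simp add: experiment_outcome_def \<Phi>_def n_def mult.assoc)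
  then show ?thesis
    using n Ks density_outer_prod[OF s] by (intro exI[of _ n] exI[of _ "outer_prod s s"] exI[of _ Ks]) auto
qed

theorem mainTheorem11:
  fixes dA dB dL :: nat and C :: "complex vec set" and PC E :: "complex mat"
  assumes "orth_proj (dA*dB) PC"
    and "C = {PC *\<^sub>v v | v. v \<in> carrier_vec (dA*dB)}"
    and "E \<in> carrier_mat (dA*dB) dL"
    and "adj E * E = 1\<^sub>m dL"
    and "(\<lambda>v. E *\<^sub>v v) ` carrier_vec dL = C"
  shows "{experiment_outcome dA E dX \<sigma> Ks | dX \<sigma> Ks.
            0 < dX \<and> density (dL*dX) \<sigma> \<and> kraus (dB*dX) Ks} = ST_B dA dB PC"
proof
  note P = assms(1) and E = assms(3) and iso = assms(4)
  have range: "(\<lambda>v. E *\<^sub>v v) ` carrier_vec dL = {PC *\<^sub>v v | v. v \<in> carrier_vec (dA*dB)}"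
    using assms(2,5) by simp
  have "PC * E = E" by (rule orth_proj_fixes_range[OF P E]) (use range in simp)
  then show "{experiment_outcome dA E dX \<sigma> Ks | dX \<sigma> Ks.
      0 < dX \<and> density (dL*dX) \<sigma> \<and> kraus (dB*dX) Ks} \<subseteq> ST_B dA dB PC"
    using experiment_outcome_in_ST_B[OF P E iso] by auto
  show "ST_B dA dB PC \<subseteq> {experiment_outcome dA E dX \<sigma> Ks | dX \<sigma> Ks.
      0 < dX \<and> density (dL*dX) \<sigma> \<and> kraus (dB*dX) Ks}"
    using ST_B_imp_experiment_outcome[OF P E iso] range by auto
qed

end
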